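(* Every Extended Bassian group is relatively Hopfian; that is, $\mathcal{EB}\subseteq\mathcal{RH}$.
   Context: All groups are abelian. A group $G$ is Bassian if there is no nonzero subgroup $H\le G$ with an injective homomorphism $G\to G/H$. A group $G$ is Extended Bassian ($G\in\mathcal{EB}$) if $G=B\oplus D$ where $B$ is Bassian and $D=\bigoplus_{p\ \text{prime}}\mathbb{Z}(p^\infty)^{(n_p)}$ with every $n_p$ finite ($\mathbb{Z}(p^\infty)$ the quasi-cyclic $p$-group, $A^{(n)}$ the direct sum of $n$ copies of $A$). A group $G$ is relatively Hopfian ($G\in\mathcal{RH}$) if $G$ is not isomorphic to a proper direct summand of any of its proper quotients, i.e., there is no nonzero subgroup $H\le G$ with $G/H=A\oplus C$, $C\neq0$ and $A\cong G$. *)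

theory Defs
  imports "HOL-Algebra.Algebra" "HOL-Computational_Algebra.Primes"
begin

text \<open>Abelian groups are written multiplicatively (HOL-Algebra convention).\<close>

definition Bassian :: "('a, 'b) monoid_scheme \<Rightarrow> bool" where
  "Bassian G \<longleftrightarrow> \<not> (\<exists>H. subgroup H G \<and> H \<noteq> {\<one>\<^bsub>G\<^esub>} \<and>
      (\<exists>f. f \<in> hom G (G Mod H) \<and> inj_on f (carrier G)))"

text \<open>The quasi-cyclic group Z(p^infinity), realised as the p-power-denominator
  rationals in [0,1) under addition modulo 1 (i.e. the p-part of Q/Z).\<close>

definition quasicyclic :: "nat \<Rightarrow> rat monoid" where
  "quasicyclic p = \<lparr>carrier = {q. 0 \<le> q \<and> q < 1 \<and> (\<exists>k. snd (quotient_of q) = int p ^ k)},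
                    monoid.mult = (\<lambda>a b. frac (a + b)), one = 0\<rparr>"

definition quasicyclic_sum :: "(nat \<Rightarrow> nat) \<Rightarrow> (nat \<times> nat \<Rightarrow> rat) monoid" where
  "quasicyclic_sum n = sum_group {(p, i). Factorial_Ring.prime (p::nat) \<and> i < n p} (\<lambda>(p, i). quasicyclic p)"

definition Extended_Bassian :: "('a, 'b) monoid_scheme \<Rightarrow> bool" where
  "Extended_Bassian G \<longleftrightarrow> (\<exists>B D. subgroup B G \<and> subgroup D G \<and>
      B <#>\<^bsub>G\<^esub> D = carrier G \<and> B \<inter> D = {\<one>\<^bsub>G\<^esub>} \<and>
      Bassian (G\<lparr>carrier := B\<rparr>) \<and>
      (\<exists>n :: nat \<Rightarrow> nat. G\<lparr>carrier := D\<rparr> \<cong> quasicyclic_sum n))"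

definition relatively_Hopfian :: "('a, 'b) monoid_scheme \<Rightarrow> bool" where
  "relatively_Hopfian G \<longleftrightarrow> \<not> (\<exists>H. subgroup H G \<and> H \<noteq> {\<one>\<^bsub>G\<^esub>} \<and>
      (\<exists>A C. subgroup A (G Mod H) \<and> subgroup C (G Mod H) \<and>
         A <#>\<^bsub>G Mod H\<^esub> C = carrier (G Mod H) \<and> A \<inter> C = {\<one>\<^bsub>G Mod H\<^esub>} \<and>
         C \<noteq> {\<one>\<^bsub>G Mod H\<^esub>} \<and> (G Mod H)\<lparr>carrier := A\<rparr> \<cong> G))"

end

(* Write G = B + D with B Bassian and D a divisible torsion group with finite p-socles D[p], and
   let pi : G -> Q = G/H be the projection and theta : G -> Q an embedding with Q = theta(G) + C.
   Put W = theta(D) + C.  The elements b of B with theta(b) in pi(D) + W form a divisible torsion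
   subgroup of B, which vanishes because B is Bassian; hence pi(D) is contained in W.  Modulo W,
   theta maps B injectively into the image of B under pi, so the Bassian property makes pi injective
   on B modulo W as well, and W = pi(D) follows.  If C were nonzero it would contain some c of prime
   order p, and theta(D[p]) and theta(D[p]) + c would be disjoint subsets of pi(D)[p] of size |D[p]|;
   but the p-socle of a homomorphic image of the torsion group D is no larger than D[p]. *)

theory Submission
  imports Defs
begin

definition torsion_set :: "('a, 'b) monoid_scheme \<Rightarrow> 'a set \<Rightarrow> bool" where
  "torsion_set G P \<longleftrightarrow> (\<forall>x\<in>P. \<exists>n::nat. n > 0 \<and> x [^]\<^bsub>G\<^esub> n = \<one>\<^bsub>G\<^esub>)"

definition divisible_set :: "('a, 'b) monoid_scheme \<Rightarrow> 'a set \<Rightarrow> bool" where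
  "divisible_set G P \<longleftrightarrow> (\<forall>x\<in>P. \<forall>n::nat. n > 0 \<longrightarrow> (\<exists>y\<in>P. y [^]\<^bsub>G\<^esub> n = x))"

definition socle :: "('a, 'b) monoid_scheme \<Rightarrow> nat \<Rightarrow> 'a set \<Rightarrow> 'a set" where
  "socle G p P = {x\<in>P. x [^]\<^bsub>G\<^esub> p = \<one>\<^bsub>G\<^esub>}"

lemma set_mult_iff: "x \<in> H <#>\<^bsub>G\<^esub> K \<longleftrightarrow> (\<exists>h\<in>H. \<exists>k\<in>K. x = h \<otimes>\<^bsub>G\<^esub> k)"
  by (auto simp: set_mult_def)

lemma (in group) subgroups_subset_set_mult:
  assumes "subgroup H G" "subgroup K G"
  shows "H \<subseteq> H <#> K" "K \<subseteq> H <#> K"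
proof -
  show "H \<subseteq> H <#> K"
  proof
    fix x assume x: "x \<in> H"
    then have "x = x \<otimes> \<one>" using assms(1) subgroup.mem_carrier r_one by metis
    then show "x \<in> H <#> K" unfolding set_mult_iff using x assms(2) subgroup.one_closed by blast
  qed
  show "K \<subseteq> H <#> K"
  proof
    fix x assume x: "x \<in> K"
    then have "x = \<one> \<otimes> x" using assms(2) subgroup.mem_carrier l_one by metis
    then show "x \<in> H <#> K" unfolding set_mult_iff using x assms(1) subgroup.one_closed by blast
  qed
qed

section \<open>Divisible subgroups are direct summands\<close>

lemma (in group) prime_power_step:
  assumes N: "subgroup N G" and g: "g \<in> carrier G" "g \<notin> N"
    and k: "k > 0" "g [^] (k::nat) \<in> N"
  shows "\<exists>(p::nat) (m::nat). Factorial_Ring.prime p \<and> g [^] m \<notin> N \<and> (g [^] m) [^] p \<in> N"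
proof -
  define k0 where "k0 = (LEAST k. k > 0 \<and> g [^] (k::nat) \<in> N)"
  have k0: "k0 > 0" "g [^] k0 \<in> N"
    using LeastI[of "\<lambda>k. k > 0 \<and> g [^] (k::nat) \<in> N", OF conjI[OF k]] by (simp_all add: k0_def)
  have min: "g [^] j \<notin> N" if "0 < j" "j < k0" for j
    using not_less_Least[of j "\<lambda>k. k > 0 \<and> g [^] (k::nat) \<in> N"] that by (simp add: k0_def)
  have "k0 \<noteq> 1" using k0 g by auto
  then obtain p where p: "Factorial_Ring.prime p" "p dvd k0" using prime_factor_nat by blast
  have "0 < k0 div p" "k0 div p < k0"
    using p k0 prime_gt_1_nat[OF p(1)] by (auto simp: dvd_div_eq_0_iff)
  then have "g [^] (k0 div p) \<notin> N" by (rule min)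
  moreover have "(g [^] (k0 div p)) [^] p = g [^] k0" using p g by (simp add: nat_pow_pow)
  ultimately show ?thesis using p(1) k0(2) by (intro exI[of _ p] exI[of _ "k0 div p"]) simp
qed

lemma (in group) coprime_int_pows_in_subgroup:
  assumes N: "subgroup N G" and g: "g \<in> carrier G"
    and "g [^] (i::int) \<in> N" "g [^] (j::int) \<in> N" "coprime i j"
  shows "g \<in> N"
proof -
  obtain u v where uv: "u * i + v * j = 1"
    using bezout_int[of i j] \<open>coprime i j\<close> by (auto simp: coprime_iff_gcd_eq_1)
  have "g = g [^] (u * i + v * j)" using g uv by simp
  also have "\<dots> = (g [^] i) [^] u \<otimes> (g [^] j) [^] v"
    using g by (simp add: int_pow_mult int_pow_pow mult.commute)
  finally show ?thesis
    using assms subgroup.m_closed[OF N] subgroup_int_pow_closed[OF N] by metis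
qed

lemma (in group) maximal_disjoint_subgroup:
  assumes P: "subgroup P G"
  shows "\<exists>M. subgroup M G \<and> P \<inter> M = {\<one>} \<and>
    (\<forall>Z. subgroup Z G \<longrightarrow> P \<inter> Z = {\<one>} \<longrightarrow> M \<subseteq> Z \<longrightarrow> Z = M)"
proof -
  define \<A> where "\<A> = {M. subgroup M G \<and> P \<inter> M = {\<one>}}"
  have "\<exists>M\<in>\<A>. \<forall>Z\<in>\<A>. M \<subseteq> Z \<longrightarrow> Z = M"
  proof (rule Zorn_Lemma2, intro ballI)
    fix \<C> assume "\<C> \<in> chains \<A>"
    then have C: "\<C> \<subseteq> \<A>" and chain: "\<And>Z Y. Z \<in> \<C> \<Longrightarrow> Y \<in> \<C> \<Longrightarrow> Z \<subseteq> Y \<or> Y \<subseteq> Z"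
      by (auto simp: chains_def chain_subset_def)
    show "\<exists>U\<in>\<A>. \<forall>Z\<in>\<C>. Z \<subseteq> U"
    proof (cases "\<C> = {}")
      case True
      have "{\<one>} \<in> \<A>" using P by (auto simp: \<A>_def triv_subgroup subgroup.one_closed)
      then show ?thesis using True by blast
    next
      case False
      have "subgroup (\<Union>\<C>) G"
      proof (rule subgroupI)
        show "\<Union>\<C> \<subseteq> carrier G" using C by (auto simp: \<A>_def dest: subgroup.subset)
        show "\<Union>\<C> \<noteq> {}" using False C by (auto simp: \<A>_def dest: subgroup.one_closed)
        fix a b assume "a \<in> \<Union>\<C>" "b \<in> \<Union>\<C>"
        then obtain Z Y where Z: "Z \<in> \<C>" "a \<in> Z" and Y: "Y \<in> \<C>" "b \<in> Y" by auto
        show "inv a \<in> \<Union>\<C>" using Z C by (auto simp: \<A>_def intro: subgroup.m_inv_closed)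
        from chain[OF Z(1) Y(1)] show "a \<otimes> b \<in> \<Union>\<C>"
          using Z Y C by (auto simp: \<A>_def intro: subgroup.m_closed)
      qed
      moreover have "P \<inter> \<Union>\<C> = {\<one>}"
        using C False P by (auto simp: \<A>_def subgroup.one_closed)
      ultimately show ?thesis by (auto simp: \<A>_def)
    qed
  qed
  then show ?thesis by (auto simp: \<A>_def)
qed

lemma (in comm_group) adjoin_element_disjoint:
  assumes P: "subgroup P G" and M: "subgroup M G" and PM: "P \<inter> M = {\<one>}" and g: "g \<in> carrier G"
    and pow: "\<And>j::int. g [^] j \<in> P <#> M \<Longrightarrow> g [^] j \<in> M"
  shows "P \<inter> (M <#> generate G {g}) = {\<one>}"
proof
  have gen: "subgroup (generate G {g}) G" using g by (simp add: generate_is_subgroup)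
  have "\<one> \<in> M <#> generate G {g}"
    using subgroups_subset_set_mult(1)[OF M gen] subgroup.one_closed[OF M] by blast
  then show "{\<one>} \<subseteq> P \<inter> (M <#> generate G {g})" using P subgroup.one_closed by blast
  show "P \<inter> (M <#> generate G {g}) \<subseteq> {\<one>}"
  proof
    fix z assume z: "z \<in> P \<inter> (M <#> generate G {g})"
    then have zP: "z \<in> P" and "z \<in> M <#> generate G {g}" by auto
    then obtain m j where m: "m \<in> M" and zmj: "z = m \<otimes> g [^] (j::int)"
      unfolding set_mult_iff generate_pow[OF g] by auto
    have mc: "m \<in> carrier G" using m M subgroup.mem_carrier by metis
    have "z = g [^] j \<otimes> m" using zmj mc g by (simp add: m_comm)
    then have "g [^] j = z \<otimes> inv m" using mc g by (simp add: m_assoc)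
    moreover have "inv m \<in> M" using m M subgroup.m_inv_closed by metis
    ultimately have "g [^] j \<in> P <#> M" using zP unfolding set_mult_iff by auto
    then have "z \<in> M" using zmj subgroup.m_closed[OF M m pow] by simp
    then show "z \<in> {\<one>}" using zP PM by auto
  qed
qed

lemma (in group) int_pow_in_subgroup_eq_0:
  assumes N: "subgroup N G" and g: "g \<in> carrier G" and none: "\<And>k::nat. k > 0 \<Longrightarrow> g [^] k \<notin> N"
    and j: "g [^] (j::int) \<in> N"
  shows "j = 0"
proof -
  define n where "n = nat \<bar>j\<bar>"
  have "g [^] n \<in> N"
  proof (cases "j \<ge> 0")
    case True
    then have "j = int n" by (simp add: n_def)
    then show ?thesis using j by (simp add: int_pow_int)
  next
    case False
    then have "j = - int n" by (simp add: n_def)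
    then have "g [^] n = inv (g [^] j)" using g by (simp add: int_pow_neg_int)
    then show ?thesis using j subgroup.m_inv_closed[OF N] by simp
  qed
  then have "n = 0" using none by (auto intro: gr0I)
  then show ?thesis by (simp add: n_def)
qed

lemma (in group) int_pow_in_subgroup_prime:
  assumes N: "subgroup N G" and M: "subgroup M G" "M \<subseteq> N" and g: "g \<in> carrier G" "g \<notin> N"
    and p: "Factorial_Ring.prime (p::nat)" "g [^] p \<in> M" and j: "g [^] (j::int) \<in> N"
  shows "g [^] j \<in> M"
proof (cases "int p dvd j")
  case True
  then obtain t where "j = int p * t" by blast
  then have "g [^] j = (g [^] p) [^] t" using g by (simp add: int_pow_pow flip: int_pow_int)
  then show ?thesis using p(2) M(1) subgroup_int_pow_closed by simp
next
  case False
  have "Factorial_Ring.prime (int p)" using p(1) by simp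
  then have "coprime j (int p)" using False prime_imp_coprime coprime_commute by blast
  moreover have "g [^] (int p) \<in> N" using p(2) M(2) by (auto simp: int_pow_int)
  ultimately have "g \<in> N" using coprime_int_pows_in_subgroup[OF N g(1) j] by blast
  then show ?thesis using g(2) by blast
qed

text \<open>Dividing off the \<open>P\<close>-component of \<open>g [^] p\<close> inside the divisible group \<open>P\<close>.\<close>

lemma (in comm_group) divisible_power_into_complement:
  assumes P: "subgroup P G" and div: "divisible_set G P" and M: "subgroup M G"
    and g: "g \<in> carrier G" "g \<notin> P <#> M" "g [^] (p::nat) \<in> P <#> M" and p: "p > 0"
  shows "\<exists>g'\<in>carrier G. g' \<notin> P <#> M \<and> g' [^] p \<in> M"
proof -
  obtain q m where q: "q \<in> P" and m: "m \<in> M" and gp: "g [^] p = q \<otimes> m"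
    using g(3) unfolding set_mult_iff by blast
  obtain y where y: "y \<in> P" "y [^] p = q" using div q p unfolding divisible_set_def by blast
  have yc: "y \<in> carrier G" and qc: "q \<in> carrier G" and mc: "m \<in> carrier G"
    using y q m P M subgroup.mem_carrier by metis+
  define g' where "g' = g \<otimes> inv y"
  have g'c: "g' \<in> carrier G" using g yc by (simp add: g'_def)
  have "g' \<notin> P <#> M"
  proof
    assume "g' \<in> P <#> M"
    moreover have "g = g' \<otimes> y" using g yc by (simp add: g'_def m_assoc)
    ultimately have "g \<in> P <#> M"
      using y subgroups_subset_set_mult(1)[OF P M] subgroup.m_closed[OF mult_subgroups[OF P M]] by auto
    then show False using g(2) by blast
  qed
  moreover have "g' [^] p = g [^] p \<otimes> inv (y [^] p)"
    using g yc by (simp add: g'_def nat_pow_distrib nat_pow_inv)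
  then have "g' [^] p = m" using gp y qc mc by (simp add: m_comm[of q] m_assoc)
  ultimately show ?thesis using g'c m by auto
qed

lemma (in comm_group) divisible_complement_step:
  assumes P: "subgroup P G" and div: "divisible_set G P" and M: "subgroup M G"
    and g: "g \<in> carrier G" "g \<notin> P <#> M"
  shows "\<exists>g'\<in>carrier G. g' \<notin> P <#> M \<and> (\<forall>j::int. g' [^] j \<in> P <#> M \<longrightarrow> g' [^] j \<in> M)"
proof (cases "\<exists>k>0. g [^] (k::nat) \<in> P <#> M")
  case False
  have "g [^] j \<in> M" if "g [^] (j::int) \<in> P <#> M" for j
  proof -
    have "j = 0" using int_pow_in_subgroup_eq_0[OF mult_subgroups[OF P M] g(1) _ that] False by blast
    then show ?thesis using M subgroup.one_closed by simp
  qed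
  then show ?thesis using g by blast
next
  case True
  then obtain p m where p: "Factorial_Ring.prime (p::nat)"
    and gm: "g [^] (m::nat) \<notin> P <#> M" "(g [^] m) [^] p \<in> P <#> M"
    using prime_power_step[OF mult_subgroups[OF P M] g] by blast
  then obtain g' where g': "g' \<in> carrier G" "g' \<notin> P <#> M" "g' [^] p \<in> M"
    using divisible_power_into_complement[OF P div M _ gm] g(1) prime_gt_0_nat[OF p] by auto
  then show ?thesis
    using int_pow_in_subgroup_prime[OF mult_subgroups[OF P M] M subgroups_subset_set_mult(2)[OF P M] _ _ p]
    by blast
qed

lemma (in comm_group) divisible_subgroup_complement:
  assumes P: "subgroup P G" and div: "divisible_set G P"
  shows "\<exists>M. subgroup M G \<and> P \<inter> M = {\<one>} \<and> P <#> M = carrier G"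
proof -
  obtain M where M: "subgroup M G" and PM: "P \<inter> M = {\<one>}"
    and max: "\<And>Z. subgroup Z G \<Longrightarrow> P \<inter> Z = {\<one>} \<Longrightarrow> M \<subseteq> Z \<Longrightarrow> Z = M"
    using maximal_disjoint_subgroup[OF P] by blast
  have "g \<in> P <#> M" if g: "g \<in> carrier G" for g
  proof (rule ccontr)
    assume "g \<notin> P <#> M"
    then obtain g' where g': "g' \<in> carrier G" "g' \<notin> P <#> M"
      and pow: "\<And>j::int. g' [^] j \<in> P <#> M \<Longrightarrow> g' [^] j \<in> M"
      using divisible_complement_step[OF P div M g] by blast
    let ?M' = "M <#> generate G {g'}"
    have gen: "subgroup (generate G {g'}) G" using g' by (simp add: generate_is_subgroup)
    have "?M' = M"
    proof (rule max)
      show "subgroup ?M' G" using mult_subgroups[OF M gen] .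
      show "P \<inter> ?M' = {\<one>}" using adjoin_element_disjoint[OF P M PM g'(1) pow] .
      show "M \<subseteq> ?M'" using subgroups_subset_set_mult[OF M gen] by blast
    qed
    moreover have "g' \<in> ?M'"
      using subgroups_subset_set_mult[OF M gen] generate.incl[of g' "{g'}" G] by blast
    ultimately show False using g'(2) subgroups_subset_set_mult[OF P M] by blast
  qed
  moreover have "P <#> M \<subseteq> carrier G" using mult_subgroups[OF P M] subgroup.subset by blast
  ultimately show ?thesis using M PM by blast
qed

lemma (in group) direct_product_unique:
  assumes P: "subgroup P G" and M: "subgroup M G" and PM: "P \<inter> M = {\<one>}"
    and "a \<in> P" "b \<in> M" "a' \<in> P" "b' \<in> M" and eq: "a \<otimes> b = a' \<otimes> b'"
  shows "a = a'" "b = b'"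
proof -
  have c: "a \<in> carrier G" "b \<in> carrier G" "a' \<in> carrier G" "b' \<in> carrier G"
    using assms subgroup.mem_carrier by metis+
  have "inv a' \<otimes> a \<otimes> b = b'"
    using c by (simp add: m_assoc eq flip: m_assoc[of "inv a'" a'])
  then have "inv a' \<otimes> a = b' \<otimes> inv b" using c by (simp add: inv_solve_right)
  moreover have "inv a' \<otimes> a \<in> P" "b' \<otimes> inv b \<in> M"
    using assms by (simp_all add: subgroup.m_closed subgroup.m_inv_closed)
  ultimately have one: "inv a' \<otimes> a = \<one>" "b' \<otimes> inv b = \<one>" using PM by auto
  have "inv a = inv a'" using inv_equality[OF one(1)] c by simp
  then show "a = a'" using c by (metis inv_inv)
  have "inv (inv b) = b'" using inv_equality[OF one(2)] c by simp
  then show "b = b'" using c by simp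
qed

section \<open>Bassian groups\<close>

text \<open>Read \<open>R\<close> as a multivalued homomorphism whose values are determined modulo \<open>R `` {\<one>}\<close>.\<close>

lemma (in comm_group) relation_embedding_into_quotient:
  assumes R: "R \<subseteq> carrier G \<times> carrier G"
    and mult: "\<And>a b c d. (a, b) \<in> R \<Longrightarrow> (c, d) \<in> R \<Longrightarrow> (a \<otimes> c, b \<otimes> d) \<in> R"
    and inv: "\<And>a b. (a, b) \<in> R \<Longrightarrow> (inv a, inv b) \<in> R"
    and total: "\<And>a. a \<in> carrier G \<Longrightarrow> \<exists>b. (a, b) \<in> R"
    and inj: "\<And>a k. (a, k) \<in> R \<Longrightarrow> (\<one>, k) \<in> R \<Longrightarrow> a = \<one>"
  shows "subgroup (R `` {\<one>}) G"
    and "\<exists>f. f \<in> hom G (G Mod (R `` {\<one>})) \<and> inj_on f (carrier G)"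
proof -
  define K where "K = R `` {\<one>}"
  have Rc: "a \<in> carrier G" "b \<in> carrier G" if "(a, b) \<in> R" for a b using R that by auto
  have sK: "subgroup K G"
  proof (rule subgroupI)
    show "K \<subseteq> carrier G" using R by (auto simp: K_def)
    show "K \<noteq> {}" using total[OF one_closed] by (auto simp: K_def)
    fix a b assume "a \<in> K" "b \<in> K"
    then show "inv a \<in> K" "a \<otimes> b \<in> K"
      using inv[of \<one> a] mult[of \<one> a \<one> b] by (auto simp: K_def)
  qed
  then show "subgroup (R `` {\<one>}) G" by (simp add: K_def)
  interpret K: normal K G using sK subgroup_imp_normal by blast
  have same_coset: "K #> b = K #> b'" if "(a, b) \<in> R" "(a, b') \<in> R" for a b b'
  proof -
    have "(a \<otimes> inv a, b \<otimes> inv b') \<in> R" using mult[OF that(1) inv[OF that(2)]] .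
    then have "b \<otimes> inv b' \<in> K" using Rc[OF that(1)] by (simp add: K_def)
    then have "b \<in> K #> b'" using K.rcos_module[OF is_group Rc(2)[OF that(2)] Rc(2)[OF that(1)]] by blast
    then show ?thesis using repr_independence[OF _ Rc(2)[OF that(2)] sK] by simp
  qed
  define sel where "sel a = (SOME b. (a, b) \<in> R)" for a
  have sel: "(a, sel a) \<in> R" if "a \<in> carrier G" for a
    using total[OF that] unfolding sel_def by (rule someI_ex)
  have sel_closed: "sel a \<in> carrier G" if "a \<in> carrier G" for a using Rc(2) sel that by blast
  define f where "f a = K #> sel a" for a
  have "f \<in> hom G (G Mod K)"
  proof (rule homI)
    fix a assume "a \<in> carrier G"
    then show "f a \<in> carrier (G Mod K)"
      using sel_closed by (auto simp: f_def FactGroup_def RCOSETS_def)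
  next
    fix a c assume a: "a \<in> carrier G" and c: "c \<in> carrier G"
    have "f (a \<otimes> c) = K #> (sel a \<otimes> sel c)"
      unfolding f_def using same_coset[OF sel mult[OF sel[OF a] sel[OF c]]] a c by auto
    also have "\<dots> = (K #> sel a) <#> (K #> sel c)"
      using K.rcos_sum[OF sel_closed[OF a] sel_closed[OF c]] by simp
    finally show "f (a \<otimes> c) = f a \<otimes>\<^bsub>G Mod K\<^esub> f c" by (simp add: f_def FactGroup_def)
  qed
  moreover have "inj_on f (carrier G)"
  proof (rule inj_onI)
    fix a c assume a: "a \<in> carrier G" and c: "c \<in> carrier G" and "f a = f c"
    then have "sel a \<in> K #> sel c" using rcos_self[OF sel_closed[OF a] sK] by (simp add: f_def)
    then have "sel a \<otimes> inv sel c \<in> K"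
      using K.rcos_module[OF is_group sel_closed[OF c] sel_closed[OF a]] by blast
    then have "(\<one>, sel a \<otimes> inv sel c) \<in> R" by (simp add: K_def)
    moreover have "(a \<otimes> inv c, sel a \<otimes> inv sel c) \<in> R" using mult[OF sel[OF a] inv[OF sel[OF c]]] .
    ultimately have "a \<otimes> inv c = \<one>" using inj by blast
    then have "inv (inv c) = a" using inv_equality[of a "inv c"] a c by simp
    then show "a = c" using c by simp
  qed
  ultimately show "\<exists>f. f \<in> hom G (G Mod (R `` {\<one>})) \<and> inj_on f (carrier G)"
    by (auto simp: K_def)
qed

lemma (in comm_group) Bassian_relation_kernel_trivial:
  assumes Bas: "Bassian G"
    and R: "R \<subseteq> carrier G \<times> carrier G"
    and mult: "\<And>a b c d. (a, b) \<in> R \<Longrightarrow> (c, d) \<in> R \<Longrightarrow> (a \<otimes> c, b \<otimes> d) \<in> R"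
    and inv: "\<And>a b. (a, b) \<in> R \<Longrightarrow> (inv a, inv b) \<in> R"
    and total: "\<And>a. a \<in> carrier G \<Longrightarrow> \<exists>b. (a, b) \<in> R"
    and inj: "\<And>a k. (a, k) \<in> R \<Longrightarrow> (\<one>, k) \<in> R \<Longrightarrow> a = \<one>"
    and k: "(\<one>, k) \<in> R"
  shows "k = \<one>"
proof -
  have "subgroup (R `` {\<one>}) G" "\<exists>f. f \<in> hom G (G Mod (R `` {\<one>})) \<and> inj_on f (carrier G)"
    by (rule relation_embedding_into_quotient; fact R mult inv total inj)+
  then have "R `` {\<one>} = {\<one>}" using Bas unfolding Bassian_def by blast
  then show ?thesis using k by auto
qed

lemma (in comm_group) Bassian_divisible_socle_trivial:
  assumes Bas: "Bassian G" and P: "subgroup P G" and div: "divisible_set G P"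
    and p: "p > 0" and z: "z \<in> P" "z [^] (p::nat) = \<one>"
  shows "z = \<one>"
proof -
  obtain M where M: "subgroup M G" and PM: "P \<inter> M = {\<one>}" and PM_all: "P <#> M = carrier G"
    using divisible_subgroup_complement[OF P div] by blast
  have Pc: "P \<subseteq> carrier G" and Mc: "M \<subseteq> carrier G" using P M subgroup.subset by auto
  \<comment> \<open>\<open>R\<close> is the graph of division by \<open>p\<close> on \<open>P\<close> and of the identity on \<open>M\<close>;
    so \<open>R `` {\<one>}\<close> is the \<open>p\<close>-socle of \<open>P\<close>.\<close>
  define R where "R = {(q \<otimes> a, y \<otimes> a) | q a y. q \<in> P \<and> a \<in> M \<and> y \<in> P \<and> y [^] p = q}"
  have R_mem: "(q \<otimes> a, y \<otimes> a) \<in> R" if "q \<in> P" "a \<in> M" "y \<in> P" "y [^] p = q" for q a y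
    unfolding R_def using that by blast
  have one: "\<one> \<in> P" "\<one> \<in> M" using P M subgroup.one_closed by auto
  show "z = \<one>"
  proof (rule Bassian_relation_kernel_trivial[OF Bas, of R])
    show "R \<subseteq> carrier G \<times> carrier G" using Pc Mc by (auto simp: R_def)
    have "(\<one> \<otimes> \<one>, z \<otimes> \<one>) \<in> R" using R_mem[OF one(1,2) z(1)] z(2) by simp
    then show "(\<one>, z) \<in> R" using z(1) Pc by auto
  next
    fix a b c d assume "(a, b) \<in> R" "(c, d) \<in> R"
    then obtain q u y q' u' y' where e: "q \<in> P" "u \<in> M" "y \<in> P" "y [^] p = q" "a = q \<otimes> u" "b = y \<otimes> u"
      "q' \<in> P" "u' \<in> M" "y' \<in> P" "y' [^] p = q'" "c = q' \<otimes> u'" "d = y' \<otimes> u'"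
      unfolding R_def by blast
    have cc: "q \<in> carrier G" "u \<in> carrier G" "y \<in> carrier G" "q' \<in> carrier G" "u' \<in> carrier G" "y' \<in> carrier G"
      using e Pc Mc by auto
    have "((q \<otimes> q') \<otimes> (u \<otimes> u'), (y \<otimes> y') \<otimes> (u \<otimes> u')) \<in> R"
      using e cc by (intro R_mem) (simp_all add: subgroup.m_closed[OF P] subgroup.m_closed[OF M] nat_pow_distrib)
    moreover have "a \<otimes> c = (q \<otimes> q') \<otimes> (u \<otimes> u')" "b \<otimes> d = (y \<otimes> y') \<otimes> (u \<otimes> u')"
      using e cc by (simp_all add: m_ac)
    ultimately show "(a \<otimes> c, b \<otimes> d) \<in> R" by simp
  next
    fix a b assume "(a, b) \<in> R"
    then obtain q u y where e: "q \<in> P" "u \<in> M" "y \<in> P" "y [^] p = q" "a = q \<otimes> u" "b = y \<otimes> u"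
      unfolding R_def by blast
    have cc: "q \<in> carrier G" "u \<in> carrier G" "y \<in> carrier G" using e Pc Mc by auto
    have "(inv q \<otimes> inv u, inv y \<otimes> inv u) \<in> R"
      using e cc by (intro R_mem) (simp_all add: subgroup.m_inv_closed[OF P] subgroup.m_inv_closed[OF M] nat_pow_inv)
    moreover have "inv a = inv q \<otimes> inv u" "inv b = inv y \<otimes> inv u"
      using e cc by (simp_all add: inv_mult m_comm)
    ultimately show "(inv a, inv b) \<in> R" by simp
  next
    fix a assume "a \<in> carrier G"
    then have "a \<in> P <#> M" using PM_all by simp
    then obtain q u where e: "q \<in> P" "u \<in> M" "a = q \<otimes> u" unfolding set_mult_iff by blast
    obtain y where "y \<in> P" "y [^] p = q" using div e(1) p unfolding divisible_set_def by blast
    then show "\<exists>b. (a, b) \<in> R" using R_mem[OF e(1,2)] e(3) by blast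
  next
    fix a k assume "(a, k) \<in> R" "(\<one>, k) \<in> R"
    then obtain q u y q' u' y' where e: "q \<in> P" "u \<in> M" "y \<in> P" "y [^] p = q" "a = q \<otimes> u" "k = y \<otimes> u"
      "q' \<in> P" "u' \<in> M" "y' \<in> P" "y' [^] p = q'" "\<one> = q' \<otimes> u'" "k = y' \<otimes> u'"
      unfolding R_def by blast
    have "q' \<otimes> u' = \<one> \<otimes> \<one>" using e(11)[symmetric] by simp
    then have q'u': "q' = \<one>" "u' = \<one>" using direct_product_unique[OF P M PM e(7,8) one] by auto
    have "y \<otimes> u = y' \<otimes> \<one>" using e(6,12) q'u'(2) by simp
    then have "y = y'" "u = \<one>" using direct_product_unique[OF P M PM e(3,2) e(9) one(2)] by auto
    then have "q = q'" using e(4,10) by metis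
    then show "a = \<one>" using e(5) \<open>u = \<one>\<close> q'u'(1) by simp
  qed
qed

lemma (in comm_group) Bassian_divisible_torsion_trivial:
  assumes Bas: "Bassian G" and P: "subgroup P G"
    and div: "divisible_set G P" and tor: "torsion_set G P"
  shows "P = {\<one>}"
proof (rule ccontr)
  assume "P \<noteq> {\<one>}"
  then obtain x where x: "x \<in> P" "x \<noteq> \<one>" using P subgroup.one_closed by blast
  have xc: "x \<in> carrier G" using x P subgroup.mem_carrier by metis
  obtain n where n: "n > 0" "x [^] (n::nat) = \<one>" using tor x unfolding torsion_set_def by blast
  obtain p m where p: "Factorial_Ring.prime (p::nat)"
    and xm: "x [^] (m::nat) \<notin> {\<one>}" "(x [^] m) [^] p \<in> {\<one>}"
    using prime_power_step[OF triv_subgroup xc _ n(1)] x(2) n(2) by auto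
  have "x [^] m \<in> P" using x P subgroup_int_pow_closed[of P x "int m"] by (simp add: int_pow_int)
  then have "x [^] m = \<one>"
    using Bassian_divisible_socle_trivial[OF Bas P div prime_gt_0_nat[OF p]] xm(2) by simp
  then show False using xm(1) by simp
qed

lemma (in comm_group) subgroup_comm_group:
  assumes "subgroup B G" shows "comm_group (G\<lparr>carrier := B\<rparr>)"
  using subgroup.subgroup_is_group[OF assms is_group]
  by (rule group.group_comm_groupI) (use assms in \<open>auto simp: m_comm subgroup.mem_carrier\<close>)

lemma (in comm_group) subgroup_Bassian_divisible_torsion_trivial:
  assumes sB: "subgroup B G" and Bas: "Bassian (G\<lparr>carrier := B\<rparr>)"
    and P: "subgroup P G" "P \<subseteq> B" and div: "divisible_set G P" and tor: "torsion_set G P"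
  shows "P = {\<one>}"
proof -
  interpret B: comm_group "G\<lparr>carrier := B\<rparr>" using subgroup_comm_group[OF sB] .
  have "P = {\<one>\<^bsub>G\<lparr>carrier := B\<rparr>\<^esub>}"
  proof (rule B.Bassian_divisible_torsion_trivial[OF Bas])
    show "subgroup P (G\<lparr>carrier := B\<rparr>)" using subgroup_incl[OF P(1) sB P(2)] .
    show "divisible_set (G\<lparr>carrier := B\<rparr>) P" "torsion_set (G\<lparr>carrier := B\<rparr>) P"
      using div tor by (simp_all add: divisible_set_def torsion_set_def flip: nat_pow_consistent)
  qed
  then show ?thesis by simp
qed

text \<open>\<open>B\<close> embeds via \<open>\<sigma>\<close> into \<open>\<tau> ` B\<close>, which is isomorphic to \<open>B\<close> modulo the kernel of \<open>\<tau>\<close>.\<close>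

lemma (in comm_group) subgroup_Bassian_hom_injective:
  assumes sB: "subgroup B G" and Bas: "Bassian (G\<lparr>carrier := B\<rparr>)" and E: "group E"
    and \<sigma>: "\<sigma> \<in> hom G E" and \<tau>: "\<tau> \<in> hom G E"
    and \<sigma>_inj: "\<And>b. b \<in> B \<Longrightarrow> \<sigma> b = \<one>\<^bsub>E\<^esub> \<Longrightarrow> b = \<one>"
    and image: "\<sigma> ` B \<subseteq> \<tau> ` B"
    and k: "k \<in> B" "\<tau> k = \<one>\<^bsub>E\<^esub>"
  shows "k = \<one>"
proof -
  interpret B: comm_group "G\<lparr>carrier := B\<rparr>" using subgroup_comm_group[OF sB] .
  interpret \<sigma>: group_hom G E \<sigma> using \<sigma> E by (simp add: group_hom_def group_hom_axioms_def is_group)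
  interpret \<tau>: group_hom G E \<tau> using \<tau> E by (simp add: group_hom_def group_hom_axioms_def is_group)
  have Bc: "b \<in> carrier G" if "b \<in> B" for b using sB that subgroup.mem_carrier by metis
  define R where "R = {(b, b'). b \<in> B \<and> b' \<in> B \<and> \<sigma> b = \<tau> b'}"
  have "k = \<one>\<^bsub>G\<lparr>carrier := B\<rparr>\<^esub>"
  proof (rule B.Bassian_relation_kernel_trivial[OF Bas, of R])
    show "R \<subseteq> carrier (G\<lparr>carrier := B\<rparr>) \<times> carrier (G\<lparr>carrier := B\<rparr>)" by (auto simp: R_def)
    show "(\<one>\<^bsub>G\<lparr>carrier := B\<rparr>\<^esub>, k) \<in> R" using k subgroup.one_closed[OF sB] by (simp add: R_def)
  next
    fix a b c d assume "(a, b) \<in> R" "(c, d) \<in> R"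
    then show "(a \<otimes>\<^bsub>G\<lparr>carrier := B\<rparr>\<^esub> c, b \<otimes>\<^bsub>G\<lparr>carrier := B\<rparr>\<^esub> d) \<in> R"
      using Bc subgroup.m_closed[OF sB] by (simp add: R_def)
  next
    fix a b assume "(a, b) \<in> R"
    then show "(inv\<^bsub>G\<lparr>carrier := B\<rparr>\<^esub> a, inv\<^bsub>G\<lparr>carrier := B\<rparr>\<^esub> b) \<in> R"
      using Bc subgroup.m_inv_closed[OF sB] m_inv_consistent[OF sB] by (simp add: R_def)
  next
    fix a assume "a \<in> carrier (G\<lparr>carrier := B\<rparr>)"
    then show "\<exists>b. (a, b) \<in> R" using image by (auto simp: R_def)
  next
    fix a k' assume "(a, k') \<in> R" "(\<one>\<^bsub>G\<lparr>carrier := B\<rparr>\<^esub>, k') \<in> R"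
    then show "a = \<one>\<^bsub>G\<lparr>carrier := B\<rparr>\<^esub>" using \<sigma>_inj by (simp add: R_def)
  qed
  then show ?thesis by simp
qed

section \<open>Socles of homomorphic images of torsion groups\<close>

lemma (in comm_group) finite_subgroup_containing:
  assumes D: "subgroup D G" and tor: "torsion_set G D" and T: "finite T" "T \<subseteq> D"
  shows "\<exists>F. subgroup F G \<and> finite F \<and> T \<subseteq> F \<and> F \<subseteq> D"
  using T
proof (induction T rule: finite_induct)
  case empty
  show ?case using D by (intro exI[of _ "{\<one>}"]) (auto simp: triv_subgroup subgroup.one_closed)
next
  case (insert t T)
  then obtain F where F: "subgroup F G" "finite F" "T \<subseteq> F" "F \<subseteq> D" by auto
  have tD: "t \<in> D" and tc: "t \<in> carrier G" using insert D subgroup.mem_carrier by auto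
  let ?C = "generate G {t}"
  have C: "subgroup ?C G" using tc by (simp add: generate_is_subgroup)
  have "finite ?C"
    using finite_cyclic_subgroup[OF tc] tor tD tc
    by (auto simp: torsion_set_def carrier_subgroup_generated Int_absorb1)
  then have "finite (F <#> ?C)"
    using F(2) finite_subset[of "F <#> ?C" "(\<lambda>(a, b). a \<otimes> b) ` (F \<times> ?C)"]
    by (auto simp: set_mult_def)
  moreover have "insert t T \<subseteq> F <#> ?C"
    using subgroups_subset_set_mult[OF F(1) C] F(3) generate.incl[of t "{t}" G] by auto
  moreover have "F <#> ?C \<subseteq> D"
  proof
    fix z assume "z \<in> F <#> ?C"
    then obtain a b where "a \<in> F" "b \<in> ?C" "z = a \<otimes> b" unfolding set_mult_iff by blast
    moreover have "?C \<subseteq> D" using generate_subgroup_incl[of "{t}" D] tD D by blast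
    ultimately show "z \<in> D" using F(4) subgroup.m_closed[OF D] by auto
  qed
  ultimately show ?case using mult_subgroups[OF F(1) C] by blast
qed

lemma (in group) card_subgroup_hom_image_kernel:
  assumes E: "group E" and F: "subgroup F G" "finite F"
    and h: "\<And>x. x \<in> F \<Longrightarrow> h x \<in> carrier E"
      "\<And>x y. x \<in> F \<Longrightarrow> y \<in> F \<Longrightarrow> h (x \<otimes> y) = h x \<otimes>\<^bsub>E\<^esub> h y"
  shows "card F = card (h ` F) * card {x\<in>F. h x = \<one>\<^bsub>E\<^esub>}"
proof -
  interpret E: group E by fact
  let ?N = "{x\<in>F. h x = \<one>\<^bsub>E\<^esub>}"
  have Fc: "x \<in> carrier G" if "x \<in> F" for x using F that subgroup.mem_carrier by metis
  have fiber: "card {x\<in>F. h x = y} = card ?N" if y: "y \<in> h ` F" for y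
  proof -
    obtain x0 where x0: "x0 \<in> F" "h x0 = y" using y by blast
    have "bij_betw (\<lambda>n. x0 \<otimes> n) ?N {x\<in>F. h x = y}"
    proof (rule bij_betw_imageI)
      show "inj_on (\<lambda>n. x0 \<otimes> n) ?N" using Fc x0 by (auto intro: inj_onI)
      show "(\<lambda>n. x0 \<otimes> n) ` ?N = {x\<in>F. h x = y}"
      proof
        show "(\<lambda>n. x0 \<otimes> n) ` ?N \<subseteq> {x\<in>F. h x = y}"
          using x0 F h by (auto intro: subgroup.m_closed)
        show "{x\<in>F. h x = y} \<subseteq> (\<lambda>n. x0 \<otimes> n) ` ?N"
        proof
          fix x assume x: "x \<in> {x\<in>F. h x = y}"
          define n where "n = inv x0 \<otimes> x"
          have nF: "n \<in> F" using F x x0 by (auto simp: n_def intro!: subgroup.m_closed subgroup.m_inv_closed)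
          have xn: "x = x0 \<otimes> n" using Fc x0 x by (simp add: n_def m_assoc[symmetric])
          moreover have "h x0 \<in> carrier E" using h(1) x0(1) .
          ultimately have "h x0 \<otimes>\<^bsub>E\<^esub> h n = h x0 \<otimes>\<^bsub>E\<^esub> \<one>\<^bsub>E\<^esub>"
            using h(2)[OF x0(1) nF] x x0(2) by simp
          then have "h n = \<one>\<^bsub>E\<^esub>" using h x0(1) nF E.l_cancel by blast
          then show "x \<in> (\<lambda>n. x0 \<otimes> n) ` ?N" using nF xn by blast
        qed
      qed
    qed
    then show ?thesis by (simp add: bij_betw_same_card)
  qed
  have "card F = card (\<Union>y\<in>h ` F. {x\<in>F. h x = y})" by (rule arg_cong[of _ _ card]) auto
  also have "\<dots> = (\<Sum>y\<in>h ` F. card {x\<in>F. h x = y})"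
    by (rule card_UN_disjoint) (use F(2) in auto)
  also have "\<dots> = card (h ` F) * card ?N" using fiber by simp
  finally show ?thesis .
qed

lemma (in comm_group) subgroup_nat_pow_image:
  assumes F: "subgroup F G" shows "subgroup ((\<lambda>x. x [^] (n::nat)) ` F) G"
proof (rule subgroupI)
  have Fc: "x \<in> carrier G" if "x \<in> F" for x using F that subgroup.mem_carrier by metis
  show "(\<lambda>x. x [^] n) ` F \<subseteq> carrier G" using Fc by auto
  show "(\<lambda>x. x [^] n) ` F \<noteq> {}" using F subgroup.one_closed by blast
  fix a b assume "a \<in> (\<lambda>x. x [^] n) ` F" "b \<in> (\<lambda>x. x [^] n) ` F"
  then obtain x y where xy: "x \<in> F" "y \<in> F" "a = x [^] n" "b = y [^] n" by blast
  have "inv a = inv x [^] n" "a \<otimes> b = (x \<otimes> y) [^] n"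
    using xy Fc by (simp_all add: nat_pow_inv nat_pow_distrib)
  then show "inv a \<in> (\<lambda>x. x [^] n) ` F" "a \<otimes> b \<in> (\<lambda>x. x [^] n) ` F"
    using xy F subgroup.m_inv_closed subgroup.m_closed by fastforce+
qed

lemma socle_card_hom_image_le_finite:
  assumes G: "comm_group G" and E: "comm_group E" and h: "h \<in> hom G E"
    and F: "subgroup F G" "finite F"
  shows "card (socle E p (h ` F)) \<le> card (socle G p F)"
proof -
  interpret G: comm_group G by fact
  interpret E: comm_group E by fact
  interpret h: group_hom G E h using h by (simp add: group_hom_def group_hom_axioms_def G.is_group E.is_group)
  have Fc: "x \<in> carrier G" if "x \<in> F" for x using F that subgroup.mem_carrier by metis
  let ?Y = "h ` F" and ?N = "{x\<in>F. h x = \<one>\<^bsub>E\<^esub>}"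
  let ?pF = "(\<lambda>x. x [^]\<^bsub>G\<^esub> p) ` F" and ?pY = "(\<lambda>y. y [^]\<^bsub>E\<^esub> p) ` ?Y"
  have Y: "subgroup ?Y E" "finite ?Y" using h.subgroup_img_is_subgroup[OF F(1)] F(2) by auto
  have Yc: "y \<in> carrier E" if "y \<in> ?Y" for y using Y that subgroup.mem_carrier by metis
  have pF: "subgroup ?pF G" "finite ?pF" using G.subgroup_nat_pow_image[OF F(1)] F(2) by auto
  have c1: "card F = card ?pF * card (socle G p F)"
    unfolding socle_def
    by (rule G.card_subgroup_hom_image_kernel[OF G.is_group F]) (simp_all add: Fc G.nat_pow_distrib)
  have c2: "card ?Y = card ?pY * card (socle E p ?Y)"
    unfolding socle_def
    by (rule E.card_subgroup_hom_image_kernel[OF E.is_group Y]) (simp_all add: Yc E.nat_pow_distrib)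
  have c3: "card F = card ?Y * card ?N"
    by (rule G.card_subgroup_hom_image_kernel[OF E.is_group F]) (simp_all add: Fc)
  have c4: "card ?pF \<le> card ?pY * card ?N"
  proof -
    let ?K = "{x\<in>?pF. h x = \<one>\<^bsub>E\<^esub>}"
    have e1: "card ?pF = card (h ` ?pF) * card ?K"
    proof (rule G.card_subgroup_hom_image_kernel[OF E.is_group pF])
      fix x y assume "x \<in> ?pF" "y \<in> ?pF"
      then have "x \<in> carrier G" "y \<in> carrier G" using Fc by auto
      then show "h x \<in> carrier E" "h (x \<otimes>\<^bsub>G\<^esub> y) = h x \<otimes>\<^bsub>E\<^esub> h y" by simp_all
    qed
    moreover have e2: "h ` ?pF = ?pY" using Fc by (force simp: h.hom_nat_pow)
    moreover have e3: "card ?K \<le> card ?N"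
      using F G.subgroup_int_pow_closed[OF F(1), of _ "int p"]
      by (intro card_mono) (auto simp: int_pow_int)
    ultimately show ?thesis using mult_le_mono2[OF e3, of "card ?pY"] by simp
  qed
  have pos: "card ?pY * card ?N > 0"
    using Y(1) F subgroup.one_closed by (fastforce simp: card_gt_0_iff)
  have "card ?pY * card ?N * card (socle E p ?Y) = card F" using c2 c3 by simp
  also have "\<dots> = card ?pF * card (socle G p F)" by (rule c1)
  also have "\<dots> \<le> card ?pY * card ?N * card (socle G p F)" using c4 by (rule mult_le_mono1)
  finally show ?thesis using pos by simp
qed

lemma socle_card_hom_image_le:
  assumes G: "comm_group G" and E: "comm_group E" and h: "h \<in> hom G E"
    and D: "subgroup D G" and tor: "torsion_set G D" and fin: "finite (socle G p D)"
  shows "finite (socle E p (h ` D))" "card (socle E p (h ` D)) \<le> card (socle G p D)"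
proof -
  have bound: "card S \<le> card (socle G p D)" if S: "finite S" "S \<subseteq> socle E p (h ` D)" for S
  proof -
    have "S \<subseteq> h ` D" using S(2) by (auto simp: socle_def)
    then obtain T where T: "T \<subseteq> D" "finite T" "S = h ` T" using finite_subset_image[OF S(1)] by blast
    obtain F where F: "subgroup F G" "finite F" "T \<subseteq> F" "F \<subseteq> D"
      using comm_group.finite_subgroup_containing[OF G D tor T(2,1)] by blast
    have "S \<subseteq> socle E p (h ` F)" using S(2) T F(3) by (auto simp: socle_def)
    then have "card S \<le> card (socle E p (h ` F))" using F(2) by (intro card_mono) (auto simp: socle_def)
    also have "\<dots> \<le> card (socle G p F)" by (rule socle_card_hom_image_le_finite[OF G E h F(1,2)])
    also have "\<dots> \<le> card (socle G p D)" using fin F(4) by (intro card_mono) (auto simp: socle_def)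
    finally show ?thesis .
  qed
  show fin': "finite (socle E p (h ` D))"
  proof (rule ccontr)
    assume "infinite (socle E p (h ` D))"
    then obtain S where "finite S" "card S = Suc (card (socle G p D))" "S \<subseteq> socle E p (h ` D)"
      using infinite_arbitrarily_large by blast
    then show False using bound[of S] by simp
  qed
  show "card (socle E p (h ` D)) \<le> card (socle G p D)" using bound[OF fin'] by simp
qed

section \<open>Quasicyclic groups\<close>

definition ppow_denom_rats :: "nat \<Rightarrow> rat set" where
  "ppow_denom_rats p = {q. \<exists>k::nat. q * of_nat (p ^ k) \<in> \<int>}"

lemma ppow_denom_rats_add: "x \<in> ppow_denom_rats p \<Longrightarrow> y \<in> ppow_denom_rats p \<Longrightarrow> x + y \<in> ppow_denom_rats p"
proof -
  assume "x \<in> ppow_denom_rats p" "y \<in> ppow_denom_rats p"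
  then obtain k j where k: "x * of_nat (p ^ k) \<in> \<int>" and j: "y * of_nat (p ^ j) \<in> \<int>" by (auto simp: ppow_denom_rats_def)
  have "(x + y) * of_nat (p ^ (k + j)) = (x * of_nat (p ^ k)) * of_nat (p ^ j) + (y * of_nat (p ^ j)) * of_nat (p ^ k)"
    by (simp add: power_add algebra_simps)
  also have "\<dots> \<in> \<int>" using Ints_add[OF Ints_mult[OF k Ints_of_nat] Ints_mult[OF j Ints_of_nat]] .
  finally show ?thesis by (auto simp: ppow_denom_rats_def)
qed

lemma ppow_denom_rats_of_int: "of_int z \<in> ppow_denom_rats p"
  by (auto simp: ppow_denom_rats_def intro!: exI[of _ 0])

lemma ppow_denom_rats_uminus: "x \<in> ppow_denom_rats p \<Longrightarrow> - x \<in> ppow_denom_rats p"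
  by (auto simp: ppow_denom_rats_def)

lemma frac_eq_add_floor: "frac (x::rat) = x + of_int (- \<lfloor>x\<rfloor>)"
  by (simp add: frac_def)

lemma ppow_denom_rats_frac: "x \<in> ppow_denom_rats p \<Longrightarrow> frac x \<in> ppow_denom_rats p"
  by (simp only: frac_eq_add_floor) (intro ppow_denom_rats_add ppow_denom_rats_of_int)

lemma frac_frac_add_left: "frac (frac a + b) = frac (a + (b::rat))"
proof -
  have "frac a + b = (a + b) + of_int (- \<lfloor>a\<rfloor>)" by (simp add: frac_def)
  then show ?thesis by (simp only: frac_add_of_int_right)
qed

lemma frac_frac_add_right: "frac (a + frac b) = frac (a + (b::rat))"
  using frac_frac_add_left[of b a] by (simp add: add.commute)

lemma quasicyclic_carrier_iff:
  assumes p: "Factorial_Ring.prime p"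
  shows "q \<in> carrier (quasicyclic p) \<longleftrightarrow> 0 \<le> q \<and> q < 1 \<and> q \<in> ppow_denom_rats p"
proof -
  obtain a b where ab: "quotient_of q = (a,b)" by (cases "quotient_of q") auto
  have b0: "b > 0" using ab quotient_of_denom_pos by blast
  have cop: "coprime a b" using ab quotient_of_coprime by blast
  have qe: "q = of_int a / of_int b" using ab quotient_of_div by blast
  have "(\<exists>k. b = int p ^ k) \<longleftrightarrow> q \<in> ppow_denom_rats p"
  proof
    assume "\<exists>k. b = int p ^ k"
    then obtain k where k: "b = int p ^ k" by blast
    have "of_int b = (of_nat (p ^ k) :: rat)" using k by simp
    moreover have "q * of_int b = of_int a" using qe b0 by simp
    ultimately have "q * of_nat (p ^ k) = of_int a" by simp
    then have "q * of_nat (p ^ k) \<in> \<int>" by (metis Ints_of_int)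
    then show "q \<in> ppow_denom_rats p" unfolding ppow_denom_rats_def by blast
  next
    assume "q \<in> ppow_denom_rats p"
    then obtain k where "q * of_nat (p ^ k) \<in> \<int>" by (auto simp: ppow_denom_rats_def)
    then obtain m where m: "q * of_nat (p ^ k) = of_int m" by (auto elim: Ints_cases)
    have "of_int a * of_nat (p ^ k) = (of_int m * of_int b :: rat)" using m qe b0
      by (simp add: field_simps)
    then have "a * int (p ^ k) = m * b" by (metis of_int_eq_iff of_int_mult of_int_of_nat_eq)
    then have "b dvd a * int (p ^ k)" by simp
    then have "b dvd int (p ^ k)" using cop by (simp add: coprime_commute coprime_dvd_mult_right_iff)
    then have "nat b dvd p ^ k" using b0 by (metis int_dvd_int_iff int_nat_eq less_le)
    then obtain i where "nat b = p ^ i" using divides_primepow_nat[OF p] by blast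
    then have "b = int p ^ i" using b0 by (metis int_nat_eq less_le of_nat_power)
    then show "\<exists>k. b = int p ^ k" by blast
  qed
  then show ?thesis by (simp add: quasicyclic_def ab)
qed

lemma quasicyclic_simps: "\<one>\<^bsub>quasicyclic p\<^esub> = 0" "x \<otimes>\<^bsub>quasicyclic p\<^esub> y = frac (x + y)"
  by (simp_all add: quasicyclic_def)

lemma quasicyclic_group:
  assumes p: "Factorial_Ring.prime p"
  shows "group (quasicyclic p)"
proof (rule groupI)
  note ci = quasicyclic_carrier_iff[OF p]
  fix x y z
  assume x: "x \<in> carrier (quasicyclic p)"
  show "\<one>\<^bsub>quasicyclic p\<^esub> \<otimes>\<^bsub>quasicyclic p\<^esub> x = x" using x by (simp add: quasicyclic_simps ci frac_eq)
  show "\<exists>y\<in>carrier (quasicyclic p). y \<otimes>\<^bsub>quasicyclic p\<^esub> x = \<one>\<^bsub>quasicyclic p\<^esub>"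
  proof (rule bexI[of _ "frac (- x)"])
    show "frac (- x) \<otimes>\<^bsub>quasicyclic p\<^esub> x = \<one>\<^bsub>quasicyclic p\<^esub>" by (simp add: quasicyclic_simps frac_frac_add_left)
    show "frac (- x) \<in> carrier (quasicyclic p)" using x by (simp add: ci frac_lt_1 ppow_denom_rats_frac ppow_denom_rats_uminus)
  qed
  assume y: "y \<in> carrier (quasicyclic p)"
  show "x \<otimes>\<^bsub>quasicyclic p\<^esub> y \<in> carrier (quasicyclic p)"
    using x y by (simp add: ci quasicyclic_simps frac_lt_1 ppow_denom_rats_frac ppow_denom_rats_add)
  assume z: "z \<in> carrier (quasicyclic p)"
  show "x \<otimes>\<^bsub>quasicyclic p\<^esub> y \<otimes>\<^bsub>quasicyclic p\<^esub> z = x \<otimes>\<^bsub>quasicyclic p\<^esub> (y \<otimes>\<^bsub>quasicyclic p\<^esub> z)"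
    by (simp add: quasicyclic_simps frac_frac_add_left frac_frac_add_right add.assoc)
next
  show "\<one>\<^bsub>quasicyclic p\<^esub> \<in> carrier (quasicyclic p)" using quasicyclic_carrier_iff[OF p] ppow_denom_rats_of_int[of 0 p] by (simp add: quasicyclic_simps)
qed

lemma quasicyclic_nat_pow: "x [^]\<^bsub>quasicyclic p\<^esub> (m::nat) = frac (of_nat m * x)"
proof (induction m)
  case 0 then show ?case by (simp add: nat_pow_def quasicyclic_def)
next
  case (Suc m)
  then show ?case by (simp add: quasicyclic_simps frac_frac_add_left algebra_simps)
qed

lemma quasicyclic_torsion:
  assumes p: "Factorial_Ring.prime p" and x: "x \<in> carrier (quasicyclic p)"
  shows "\<exists>m>0. x [^]\<^bsub>quasicyclic p\<^esub> (m::nat) = \<one>\<^bsub>quasicyclic p\<^esub>"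
proof -
  obtain k where k: "x * of_nat (p ^ k) \<in> \<int>" using x quasicyclic_carrier_iff[OF p] by (auto simp: ppow_denom_rats_def)
  have "p ^ k > 0" using p prime_gt_0_nat by simp
  moreover have "x [^]\<^bsub>quasicyclic p\<^esub> (p ^ k) = \<one>\<^bsub>quasicyclic p\<^esub>"
    using k by (simp add: quasicyclic_nat_pow quasicyclic_simps mult.commute)
  ultimately show ?thesis by blast
qed

lemma ppow_denom_rats_shift_div:
  assumes p: "Factorial_Ring.prime p" and x: "x \<in> ppow_denom_rats p" and m: "(m::nat) > 0"
  shows "\<exists>t::int. (x + of_int t) / of_nat m \<in> ppow_denom_rats p"
proof -
  obtain k where k: "x * of_nat (p ^ k) \<in> \<int>" using x by (auto simp: ppow_denom_rats_def)
  then obtain a where a: "x * of_nat (p ^ k) = of_int a" by (auto elim: Ints_cases)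
  have p1: "p > 1" using p prime_gt_1_nat by blast
  obtain m' where mm: "m = p ^ multiplicity p m * m'" "\<not> p dvd m'"
    using multiplicity_decompose'[of m p] m p1 by auto
  define e where "e = multiplicity p m"
  have m'0: "m' > 0" using mm m by (auto intro: gr0I)
  have "coprime (int m') (int (p ^ k))"
  proof -
    have "coprime p m'" using prime_imp_coprime[OF p mm(2)] .
    then have "coprime m' p" by (simp add: coprime_commute)
    then have "coprime m' (p ^ k)" by simp
    then show ?thesis by simp
  qed
  then obtain u v where uv: "u * int m' + v * int (p ^ k) = 1" using bezout_int by (metis coprime_iff_gcd_eq_1)
  define t where "t = - a * v"
  have "int m' dvd a + t * int (p ^ k)"
  proof -
    have "a + t * int (p ^ k) = a * (u * int m')" using uv by (simp add: t_def algebra_simps) (metis add_diff_cancel_left' diff_add_cancel mult.assoc mult.right_neutral right_diff_distrib)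
    then show ?thesis by simp
  qed
  then obtain w where w: "a + t * int (p ^ k) = int m' * w" by (auto elim: dvdE)
  define z where "z = (x + of_int t) / of_nat m"
  have zint: "z * of_nat (p ^ (k + e)) = of_int w"
  proof -
    have "z * of_nat (p ^ (k + e)) = (x * of_nat (p ^ k) + of_int t * of_nat (p ^ k)) * of_nat (p ^ e) / of_nat m"
      by (simp add: z_def power_add algebra_simps)
    also have "\<dots> = of_int (int m' * w) * of_nat (p ^ e) / of_nat m" using a w
      by (metis (no_types, lifting) of_int_add of_int_mult of_int_of_nat_eq)
    also have "\<dots> = of_int w"
    proof -
      have eq: "p ^ e * m' = m" unfolding e_def using mm(1) by (rule sym)
      have mq: "(of_nat m :: rat) = of_nat m' * of_nat (p ^ e)" by (metis eq of_nat_mult mult.commute)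
      show ?thesis using m m'0 p1 by (simp add: mq)
    qed
    finally show ?thesis .
  qed
  have "z * of_nat (p ^ (k + e)) \<in> \<int>" using zint by (metis Ints_of_int)
  then show ?thesis unfolding ppow_denom_rats_def z_def by blast
qed

lemma quasicyclic_divisible:
  assumes p: "Factorial_Ring.prime p" and x: "x \<in> carrier (quasicyclic p)" and m: "m > 0"
  shows "\<exists>y\<in>carrier (quasicyclic p). y [^]\<^bsub>quasicyclic p\<^esub> (m::nat) = x"
proof -
  note ci = quasicyclic_carrier_iff[OF p]
  obtain t where t: "(x + of_int t) / of_nat m \<in> ppow_denom_rats p"
    using ppow_denom_rats_shift_div[OF p _ m] x ci by blast
  define z where "z = (x + of_int t) / of_nat m"
  define y where "y = frac z"
  have yc: "y \<in> carrier (quasicyclic p)"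
    using t ci by (simp add: y_def z_def frac_lt_1 ppow_denom_rats_frac)
  have "y [^]\<^bsub>quasicyclic p\<^esub> m = frac (of_nat m * frac z)" by (simp add: quasicyclic_nat_pow y_def)
  also have "of_nat m * frac z = of_nat m * z + of_int (- (int m * \<lfloor>z\<rfloor>))" by (simp add: frac_def algebra_simps)
  also have "of_nat m * z = x + of_int t" using m by (simp add: z_def)
  also have "frac (x + of_int t + of_int (- (int m * \<lfloor>z\<rfloor>))) = x" using x ci
    by (simp only: frac_add_of_int_right) (simp add: frac_eq)
  finally show ?thesis using yc by blast
qed

lemma quasicyclic_socle:
  assumes p: "Factorial_Ring.prime p" and q: "Factorial_Ring.prime q"
    and x: "x \<in> carrier (quasicyclic q)" and xp: "x [^]\<^bsub>quasicyclic q\<^esub> p = \<one>\<^bsub>quasicyclic q\<^esub>"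
  shows "x \<in> (if q = p then (\<lambda>j. of_nat j / of_nat p) ` {..<p} else {0})"
proof -
  note ci = quasicyclic_carrier_iff[OF q]
  have px: "of_nat p * x \<in> \<int>" using xp by (simp add: quasicyclic_nat_pow quasicyclic_simps)
  have x01: "0 \<le> x" "x < 1" using x ci by auto
  show ?thesis
  proof (cases "q = p")
    case True
    obtain j where j: "of_nat p * x = of_int j" using px by (auto elim: Ints_cases)
    have p0: "p > 0" using p prime_gt_0_nat by blast
    have "0 \<le> j" using j x01 p0 by (metis of_int_0_le_iff of_nat_0_le_iff zero_le_mult_iff)
    moreover have "j < int p" using j x01 p0
      by (metis mult_less_cancel_left_pos mult.right_neutral of_int_less_iff of_int_of_nat_eq of_nat_0_less_iff)
    ultimately have "nat j \<in> {..<p}" by auto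
    moreover have "x = of_nat (nat j) / of_nat p" using j p0 \<open>0 \<le> j\<close> by (simp add: field_simps)
    ultimately show ?thesis using True by auto
  next
    case False
    obtain k where k: "x * of_nat (q ^ k) \<in> \<int>" using x ci by (auto simp: ppow_denom_rats_def)
    have "coprime p (q ^ k)" using False p q by (simp add: primes_coprime coprime_commute)
    then have "coprime (int p) (int (q ^ k))" by simp
    then obtain u v where uv: "u * int p + v * int (q ^ k) = 1" using bezout_int by (metis coprime_iff_gcd_eq_1)
    have "x = of_int u * (of_nat p * x) + of_int v * (x * of_nat (q ^ k))"
    proof -
      have "(of_int (u * int p + v * int (q ^ k)) :: rat) = 1" using uv by simp
      then have "of_int u * of_nat p + of_int v * of_nat (q ^ k) = (1::rat)" by simp
      then show ?thesis by (metis (no_types, lifting) distrib_right mult.assoc mult.commute mult.left_neutral)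
    qed
    also have "\<dots> \<in> \<int>" using Ints_add[OF Ints_mult[OF Ints_of_int px] Ints_mult[OF Ints_of_int k]] .
    finally have "x \<in> \<int>" .
    then obtain i where i: "x = of_int i" by (auto elim: Ints_cases)
    then have "0 \<le> i" "i < 1" using x01 by auto
    then have "x = 0" using i by simp
    then show ?thesis using False by simp
  qed
qed

lemma case_prod_quasicyclic: "(\<lambda>(p, i). quasicyclic p) j = quasicyclic (fst j)"
  by (simp add: case_prod_beta)

lemma quasicyclic_sum_group: "group (quasicyclic_sum n)"
  unfolding quasicyclic_sum_def by (rule sum_group) (auto simp: quasicyclic_group)

lemma quasicyclic_sum_carrier: "carrier (quasicyclic_sum n) =
  {x \<in> \<Pi>\<^sub>E j\<in>{(p, i). Factorial_Ring.prime (p::nat) \<and> i < n p}. carrier (quasicyclic (fst j)).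
     finite {j \<in> {(p, i). Factorial_Ring.prime (p::nat) \<and> i < n p}. x j \<noteq> 0}}"
  unfolding quasicyclic_sum_def
  by (subst carrier_sum_group) (auto simp: quasicyclic_group case_prod_quasicyclic quasicyclic_simps)

lemma quasicyclic_sum_one: "\<one>\<^bsub>quasicyclic_sum n\<^esub> = (\<lambda>j\<in>{(p, i). Factorial_Ring.prime (p::nat) \<and> i < n p}. 0)"
  unfolding quasicyclic_sum_def by (simp add: case_prod_quasicyclic quasicyclic_simps)

lemma quasicyclic_sum_nat_pow: "x [^]\<^bsub>quasicyclic_sum n\<^esub> (m::nat) =
   (\<lambda>j\<in>{(p, i). Factorial_Ring.prime (p::nat) \<and> i < n p}. frac (of_nat m * x j))"
proof (induction m)
  case 0 then show ?case by (simp add: nat_pow_def quasicyclic_sum_one)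
next
  case (Suc m)
  have "x [^]\<^bsub>quasicyclic_sum n\<^esub> Suc m = x [^]\<^bsub>quasicyclic_sum n\<^esub> m \<otimes>\<^bsub>quasicyclic_sum n\<^esub> x" by simp
  also have "\<dots> = (\<lambda>j\<in>{(p, i). Factorial_Ring.prime (p::nat) \<and> i < n p}. frac (of_nat m * x j)) \<otimes>\<^bsub>quasicyclic_sum n\<^esub> x"
    by (simp only: Suc.IH)
  also have "\<dots> = (\<lambda>j\<in>{(p, i). Factorial_Ring.prime (p::nat) \<and> i < n p}. frac (of_nat (Suc m) * x j))"
    unfolding quasicyclic_sum_def mult_sum_group
    by (auto simp: fun_eq_iff case_prod_quasicyclic quasicyclic_simps frac_frac_add_left algebra_simps)
  finally show ?case .
qed

lemma quasicyclic_sum_torsion: "torsion_set (quasicyclic_sum n) (carrier (quasicyclic_sum n))"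
  unfolding torsion_set_def
proof
  fix x assume x: "x \<in> carrier (quasicyclic_sum n)"
  let ?I = "{(p, i). Factorial_Ring.prime (p::nat) \<and> i < n p}"
  define S where "S = {j \<in> ?I. x j \<noteq> 0}"
  have xc: "\<And>j. j \<in> ?I \<Longrightarrow> x j \<in> carrier (quasicyclic (fst j))" and fS: "finite S"
    using x by (auto simp: quasicyclic_sum_carrier S_def PiE_iff)
  have ex: "\<exists>m>0. of_nat m * x j \<in> \<int>" if "j \<in> ?I" for j
  proof -
    have "Factorial_Ring.prime (fst j)" using that by auto
    from quasicyclic_torsion[OF this xc[OF that]] obtain m where "m > 0" "frac (of_nat m * x j) = 0"
      by (auto simp: quasicyclic_nat_pow quasicyclic_simps)
    then show ?thesis by auto
  qed
  define mf where "mf j = (SOME m. m > 0 \<and> of_nat m * x j \<in> \<int>)" for j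
  have mf: "mf j > 0 \<and> of_nat (mf j) * x j \<in> \<int>" if "j \<in> ?I" for j
    unfolding mf_def using someI_ex[OF ex[OF that]] .
  define N where "N = prod mf S"
  have N0: "N > 0" using mf fS by (auto simp: N_def S_def intro!: prod_pos)
  have "x [^]\<^bsub>quasicyclic_sum n\<^esub> N = \<one>\<^bsub>quasicyclic_sum n\<^esub>"
    unfolding quasicyclic_sum_nat_pow quasicyclic_sum_one
  proof (rule restrict_ext)
    fix j assume j: "j \<in> ?I"
    show "frac (of_nat N * x j) = 0"
    proof (cases "j \<in> S")
      case True
      then have "mf j dvd N" using fS by (simp add: N_def dvd_prodI)
      then obtain r where r: "N = mf j * r" by (auto elim: dvdE)
      have "of_nat N * x j = of_nat r * (of_nat (mf j) * x j)" by (simp add: r)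
      also have "\<dots> \<in> \<int>" using Ints_mult[OF Ints_of_nat conjunct2[OF mf[OF j]]] .
      finally show ?thesis by simp
    next
      case False then show ?thesis using j by (simp add: S_def)
    qed
  qed
  then show "\<exists>m::nat. m > 0 \<and> x [^]\<^bsub>quasicyclic_sum n\<^esub> m = \<one>\<^bsub>quasicyclic_sum n\<^esub>"
    using N0 by blast
qed

lemma quasicyclic_sum_divisible: "divisible_set (quasicyclic_sum n) (carrier (quasicyclic_sum n))"
  unfolding divisible_set_def
proof (intro ballI allI impI)
  fix x and m :: nat assume x: "x \<in> carrier (quasicyclic_sum n)" and m: "m > 0"
  let ?I = "{(p, i). Factorial_Ring.prime (p::nat) \<and> i < n p}"
  have xc: "\<And>j. j \<in> ?I \<Longrightarrow> x j \<in> carrier (quasicyclic (fst j))" and fS: "finite {j \<in> ?I. x j \<noteq> 0}"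
    and xe: "x \<in> extensional ?I"
    using x by (auto simp: quasicyclic_sum_carrier PiE_iff)
  have ex: "\<exists>y. y \<in> carrier (quasicyclic (fst j)) \<and> frac (of_nat m * y) = x j" if "j \<in> ?I" for j
  proof -
    have "Factorial_Ring.prime (fst j)" using that by auto
    from quasicyclic_divisible[OF this xc[OF that] m] show ?thesis by (auto simp: quasicyclic_nat_pow)
  qed
  define y where "y = (\<lambda>j\<in>?I. if x j = 0 then 0 else (SOME y. y \<in> carrier (quasicyclic (fst j)) \<and> frac (of_nat m * y) = x j))"
  have yj: "y j \<in> carrier (quasicyclic (fst j)) \<and> frac (of_nat m * y j) = x j" if j: "j \<in> ?I" for j
  proof (cases "x j = 0")
    case True
    have "Factorial_Ring.prime (fst j)" using j by auto
    then have "(0::rat) \<in> carrier (quasicyclic (fst j))" using quasicyclic_carrier_iff ppow_denom_rats_of_int[of 0] by force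
    then show ?thesis using True j by (simp add: y_def)
  next
    case False
    then show ?thesis using j someI_ex[OF ex[OF j]] by (simp add: y_def)
  qed
  have "y \<in> carrier (quasicyclic_sum n)"
  proof -
    have "{j \<in> ?I. y j \<noteq> 0} \<subseteq> {j \<in> ?I. x j \<noteq> 0}" by (auto simp: y_def)
    then have "finite {j \<in> ?I. y j \<noteq> 0}" using fS finite_subset by blast
    moreover have "y \<in> (\<Pi>\<^sub>E j\<in>?I. carrier (quasicyclic (fst j)))" using yj by (auto simp: y_def PiE_iff)
    ultimately show ?thesis by (simp add: quasicyclic_sum_carrier)
  qed
  moreover have "y [^]\<^bsub>quasicyclic_sum n\<^esub> m = x"
    unfolding quasicyclic_sum_nat_pow using yj xe by (auto simp: fun_eq_iff extensional_def)
  ultimately show "\<exists>y\<in>carrier (quasicyclic_sum n). y [^]\<^bsub>quasicyclic_sum n\<^esub> m = x" by blast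
qed

lemma finite_PiE_singleton_outside:
  assumes J: "finite J" "\<And>j. j \<in> J \<Longrightarrow> finite (V j)" and V: "\<And>j. j \<in> I - J \<Longrightarrow> V j \<subseteq> {c}"
  shows "finite (\<Pi>\<^sub>E j\<in>I. V j)"
proof -
  have "inj_on (\<lambda>x. restrict x (J \<inter> I)) (\<Pi>\<^sub>E j\<in>I. V j)"
  proof (rule inj_onI)
    fix x y assume x: "x \<in> (\<Pi>\<^sub>E j\<in>I. V j)" and y: "y \<in> (\<Pi>\<^sub>E j\<in>I. V j)"
      and e: "restrict x (J \<inter> I) = restrict y (J \<inter> I)"
    show "x = y"
    proof
      fix j
      consider "j \<in> J \<inter> I" | "j \<in> I - J" | "j \<notin> I" by blast
      then show "x j = y j"
      proof cases
        case 1 then show ?thesis using fun_cong[OF e, of j] by simp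
      next
        case 2 then show ?thesis using V[OF 2] x y by (auto simp: PiE_iff)
      next
        case 3 then show ?thesis using PiE_arb[OF x 3] PiE_arb[OF y 3] by simp
      qed
    qed
  qed
  moreover have "(\<lambda>x. restrict x (J \<inter> I)) ` (\<Pi>\<^sub>E j\<in>I. V j) \<subseteq> (\<Pi>\<^sub>E j\<in>J \<inter> I. V j)"
    by (auto simp: PiE_iff split: if_splits)
  moreover have "finite (\<Pi>\<^sub>E j\<in>J \<inter> I. V j)" using J by (intro finite_PiE) auto
  ultimately show ?thesis using finite_subset finite_imageD by metis
qed

lemma quasicyclic_sum_finite_socle:
  assumes p: "Factorial_Ring.prime (p::nat)"
  shows "finite (socle (quasicyclic_sum n) p (carrier (quasicyclic_sum n)))"
proof -
  let ?I = "{(p, i). Factorial_Ring.prime (p::nat) \<and> i < n p}"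
  define V where "V j = (if fst j = p then (\<lambda>k. of_nat k / of_nat p) ` {..<p} else {0::rat})" for j :: "nat \<times> nat"
  have sub: "socle (quasicyclic_sum n) p (carrier (quasicyclic_sum n)) \<subseteq> (\<Pi>\<^sub>E j\<in>?I. V j)"
  proof
    fix x assume "x \<in> socle (quasicyclic_sum n) p (carrier (quasicyclic_sum n))"
    then have x: "x \<in> carrier (quasicyclic_sum n)"
      and xp: "x [^]\<^bsub>quasicyclic_sum n\<^esub> p = \<one>\<^bsub>quasicyclic_sum n\<^esub>" by (auto simp: socle_def)
    have xc: "\<And>j. j \<in> ?I \<Longrightarrow> x j \<in> carrier (quasicyclic (fst j))" and xe: "x \<in> extensional ?I"
      using x by (auto simp: quasicyclic_sum_carrier PiE_iff)
    have "x j \<in> V j" if j: "j \<in> ?I" for j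
    proof -
      have q: "Factorial_Ring.prime (fst j)" using j by auto
      have "frac (of_nat p * x j) = 0"
        using fun_cong[OF xp, of j] j by (simp add: quasicyclic_sum_nat_pow quasicyclic_sum_one)
      then have "x j [^]\<^bsub>quasicyclic (fst j)\<^esub> p = \<one>\<^bsub>quasicyclic (fst j)\<^esub>"
        by (simp add: quasicyclic_nat_pow quasicyclic_simps)
      from quasicyclic_socle[OF p q xc[OF j] this] show ?thesis by (simp add: V_def)
    qed
    then show "x \<in> (\<Pi>\<^sub>E j\<in>?I. V j)" using xe by (auto simp: PiE_iff)
  qed
  have "finite (\<Pi>\<^sub>E j\<in>?I. V j)"
    by (rule finite_PiE_singleton_outside[of "{(p, i) | i. i < n p}" _ _ 0]) (auto simp: V_def)
  then show ?thesis using sub finite_subset by blast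
qed

lemma iso_reflects_torsion_divisible_socle:
  assumes \<phi>: "\<phi> \<in> iso G H" and G: "group G" and H: "group H"
  shows "torsion_set H (carrier H) \<Longrightarrow> torsion_set G (carrier G)"
    and "divisible_set H (carrier H) \<Longrightarrow> divisible_set G (carrier G)"
    and "finite (socle H p (carrier H)) \<Longrightarrow> finite (socle G p (carrier G))"
proof -
  interpret \<phi>: group_hom G H \<phi>
    using \<phi> G H by (simp add: group_hom_def group_hom_axioms_def iso_def)
  have inj: "inj_on \<phi> (carrier G)" and onto: "\<phi> ` carrier G = carrier H"
    using \<phi> by (auto simp: iso_def bij_betw_def)
  have pow_eq: "x [^]\<^bsub>G\<^esub> n = y \<longleftrightarrow> \<phi> x [^]\<^bsub>H\<^esub> n = \<phi> y"
    if "x \<in> carrier G" "y \<in> carrier G" for x y and n :: nat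
    using inj_onD[OF inj] that by (auto simp flip: \<phi>.hom_nat_pow)
  show "torsion_set G (carrier G)" if tor: "torsion_set H (carrier H)"
    unfolding torsion_set_def
  proof
    fix x assume x: "x \<in> carrier G"
    then obtain n :: nat where n: "n > 0" "\<phi> x [^]\<^bsub>H\<^esub> n = \<one>\<^bsub>H\<^esub>"
      using tor \<phi>.hom_closed unfolding torsion_set_def by blast
    then have "x [^]\<^bsub>G\<^esub> n = \<one>\<^bsub>G\<^esub>" using pow_eq[OF x \<phi>.G.one_closed] by simp
    then show "\<exists>n::nat. n > 0 \<and> x [^]\<^bsub>G\<^esub> n = \<one>\<^bsub>G\<^esub>" using n(1) by blast
  qed
  show "divisible_set G (carrier G)" if div: "divisible_set H (carrier H)"
    unfolding divisible_set_def
  proof (intro ballI allI impI)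
    fix x and n :: nat assume x: "x \<in> carrier G" and "n > 0"
    have "\<phi> x \<in> carrier H" using x by simp
    then obtain y where y: "y \<in> carrier H" "y [^]\<^bsub>H\<^esub> n = \<phi> x"
      using div \<open>n > 0\<close> unfolding divisible_set_def by blast
    obtain z where z: "z \<in> carrier G" "y = \<phi> z" using y(1) onto by auto
    then have "z [^]\<^bsub>G\<^esub> n = x" using pow_eq[OF z(1) x] y(2) by simp
    then show "\<exists>z\<in>carrier G. z [^]\<^bsub>G\<^esub> n = x" using z(1) by blast
  qed
  show "finite (socle G p (carrier G))" if fin: "finite (socle H p (carrier H))"
  proof -
    have "\<phi> ` socle G p (carrier G) \<subseteq> socle H p (carrier H)"
    proof
      fix y assume "y \<in> \<phi> ` socle G p (carrier G)"
      then obtain x where x: "x \<in> carrier G" "x [^]\<^bsub>G\<^esub> p = \<one>\<^bsub>G\<^esub>" "y = \<phi> x"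
        by (auto simp: socle_def)
      then have "y [^]\<^bsub>H\<^esub> p = \<one>\<^bsub>H\<^esub>" using pow_eq[OF x(1) \<phi>.G.one_closed] by simp
      then show "y \<in> socle H p (carrier H)" using x by (simp add: socle_def)
    qed
    moreover have "inj_on \<phi> (socle G p (carrier G))"
      using inj_on_subset[OF inj, of "socle G p (carrier G)"] by (auto simp: socle_def)
    ultimately show ?thesis using finite_subset[OF _ fin] finite_imageD by blast
  qed
qed

section \<open>Quotients containing a copy of an extended Bassian group\<close>

locale ext_Bassian_decomposition = comm_group G for G (structure) +
  fixes B D :: "'a set"
  assumes B_subgroup: "subgroup B G" and D_subgroup: "subgroup D G"
    and BD_product: "B <#> D = carrier G" and BD_disjoint: "B \<inter> D = {\<one>}"
    and Bassian_B: "Bassian (G\<lparr>carrier := B\<rparr>)"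
    and torsion_D: "torsion_set G D" and divisible_D: "divisible_set G D"
    and finite_socle_D: "\<And>p. Factorial_Ring.prime p \<Longrightarrow> finite (socle G p D)"
begin

lemma BD_decompose:
  assumes "g \<in> carrier G" obtains b d where "b \<in> B" "d \<in> D" "g = b \<otimes> d"
proof -
  have "g \<in> B <#> D" using assms BD_product by simp
  then show thesis using that unfolding set_mult_iff by blast
qed

lemma B_carrier: "b \<in> B \<Longrightarrow> b \<in> carrier G" and D_carrier: "d \<in> D \<Longrightarrow> d \<in> carrier G"
  using B_subgroup D_subgroup subgroup.mem_carrier by metis+

end

locale quotient_with_summand_copy = ext_Bassian_decomposition G B D + Q: comm_group Q
  for G (structure) and B D and Q (structure) +
  fixes \<pi> \<theta> :: "'a \<Rightarrow> 'c" and C :: "'c set"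
  assumes pi_hom: "\<pi> \<in> hom G Q" and pi_onto: "\<pi> ` carrier G = carrier Q"
    and theta_hom: "\<theta> \<in> hom G Q" and theta_inj: "inj_on \<theta> (carrier G)"
    and C_subgroup: "subgroup C Q"
    and theta_C_product: "\<theta> ` carrier G <#>\<^bsub>Q\<^esub> C = carrier Q"
    and theta_C_disjoint: "\<theta> ` carrier G \<inter> C = {\<one>\<^bsub>Q\<^esub>}"

sublocale quotient_with_summand_copy \<subseteq> \<pi>: group_hom G Q \<pi>
  by (simp add: group_hom_def group_hom_axioms_def is_group Q.is_group pi_hom)

sublocale quotient_with_summand_copy \<subseteq> \<theta>: group_hom G Q \<theta>
  by (simp add: group_hom_def group_hom_axioms_def is_group Q.is_group theta_hom)

context quotient_with_summand_copy
begin

definition W :: "'c set" where "W = \<theta> ` D <#>\<^bsub>Q\<^esub> C"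

lemma W_subgroup: "subgroup W Q"
  unfolding W_def using Q.mult_subgroups[OF \<theta>.subgroup_img_is_subgroup[OF D_subgroup] C_subgroup] .

lemma W_carrier: "w \<in> W \<Longrightarrow> w \<in> carrier Q"
  using W_subgroup subgroup.mem_carrier by metis

lemma theta_D_in_W: "d \<in> D \<Longrightarrow> \<theta> d \<in> W" and C_in_W: "c \<in> C \<Longrightarrow> c \<in> W"
  unfolding W_def
  using Q.subgroups_subset_set_mult[OF \<theta>.subgroup_img_is_subgroup[OF D_subgroup] C_subgroup] by auto

lemma Q_decompose:
  assumes "q \<in> carrier Q" obtains b w where "b \<in> B" "w \<in> W" "q = \<theta> b \<otimes>\<^bsub>Q\<^esub> w"
proof -
  have "q \<in> \<theta> ` carrier G <#>\<^bsub>Q\<^esub> C" using assms theta_C_product by simp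
  then obtain g c where g: "g \<in> carrier G" and c: "c \<in> C" and q: "q = \<theta> g \<otimes>\<^bsub>Q\<^esub> c"
    unfolding set_mult_iff by blast
  obtain b d where b: "b \<in> B" and d: "d \<in> D" and gbd: "g = b \<otimes> d" using BD_decompose[OF g] .
  have "c \<in> carrier Q" using c C_subgroup subgroup.mem_carrier by metis
  then have "q = \<theta> b \<otimes>\<^bsub>Q\<^esub> (\<theta> d \<otimes>\<^bsub>Q\<^esub> c)"
    using q gbd B_carrier[OF b] D_carrier[OF d] by (simp add: Q.m_assoc)
  moreover have "\<theta> d \<otimes>\<^bsub>Q\<^esub> c \<in> W" using subgroup.m_closed[OF W_subgroup theta_D_in_W[OF d] C_in_W[OF c]] .
  ultimately show thesis using that[OF b] by blast
qed

lemma pi_decompose: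
  assumes "q \<in> carrier Q" obtains b d where "b \<in> B" "d \<in> D" "q = \<pi> b \<otimes>\<^bsub>Q\<^esub> \<pi> d"
proof -
  obtain g where g: "g \<in> carrier G" and q: "q = \<pi> g" using assms pi_onto by blast
  obtain b d where b: "b \<in> B" and d: "d \<in> D" and gbd: "g = b \<otimes> d" using BD_decompose[OF g] .
  have "q = \<pi> b \<otimes>\<^bsub>Q\<^esub> \<pi> d" using q gbd B_carrier[OF b] D_carrier[OF d] by simp
  then show thesis using that[OF b d] by blast
qed

lemma theta_B_in_W_trivial:
  assumes b: "b \<in> B" and bW: "\<theta> b \<in> W" shows "b = \<one>"
proof -
  obtain d c where d: "d \<in> D" and c: "c \<in> C" and eq: "\<theta> b = \<theta> d \<otimes>\<^bsub>Q\<^esub> c"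
    using bW unfolding W_def set_mult_iff by blast
  have A: "subgroup (\<theta> ` carrier G) Q" using \<theta>.img_is_subgroup .
  have "\<theta> b \<otimes>\<^bsub>Q\<^esub> \<one>\<^bsub>Q\<^esub> = \<theta> d \<otimes>\<^bsub>Q\<^esub> c"
    using Q.r_one \<theta>.hom_closed B_carrier b eq by metis
  then have "\<theta> b = \<theta> d"
    using Q.direct_product_unique(1)[OF A C_subgroup theta_C_disjoint] b d c B_carrier D_carrier
      subgroup.one_closed[OF C_subgroup] by blast
  then have "b = d" using theta_inj b d B_carrier D_carrier by (auto dest: inj_onD)
  then show ?thesis using b d BD_disjoint by auto
qed

definition theta_mod_W :: "'a \<Rightarrow> 'c set" where "theta_mod_W x = W #>\<^bsub>Q\<^esub> \<theta> x"
definition pi_mod_W :: "'a \<Rightarrow> 'c set" where "pi_mod_W x = W #>\<^bsub>Q\<^esub> \<pi> x"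

lemma mod_W_group_hom: "group_hom Q (Q Mod W) (\<lambda>x. W #>\<^bsub>Q\<^esub> x)"
  using normal.r_coset_hom_Mod[OF Q.subgroup_imp_normal[OF W_subgroup]]
    normal.factorgroup_is_group[OF Q.subgroup_imp_normal[OF W_subgroup]]
  by (simp add: group_hom_def group_hom_axioms_def Q.is_group)

lemma theta_mod_W_group_hom: "group_hom G (Q Mod W) theta_mod_W"
proof -
  interpret \<rho>: group_hom Q "Q Mod W" "\<lambda>x. W #>\<^bsub>Q\<^esub> x" by (rule mod_W_group_hom)
  have "theta_mod_W \<in> hom G (Q Mod W)" by (rule homI) (simp_all add: theta_mod_W_def)
  then show ?thesis by (simp add: group_hom_def group_hom_axioms_def is_group \<rho>.H.is_group)
qed

lemma pi_mod_W_group_hom: "group_hom G (Q Mod W) pi_mod_W"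
proof -
  interpret \<rho>: group_hom Q "Q Mod W" "\<lambda>x. W #>\<^bsub>Q\<^esub> x" by (rule mod_W_group_hom)
  have "pi_mod_W \<in> hom G (Q Mod W)" by (rule homI) (simp_all add: pi_mod_W_def)
  then show ?thesis by (simp add: group_hom_def group_hom_axioms_def is_group \<rho>.H.is_group)
qed

lemma mod_W_eq_one: "x \<in> carrier Q \<Longrightarrow> W #>\<^bsub>Q\<^esub> x = \<one>\<^bsub>Q Mod W\<^esub> \<longleftrightarrow> x \<in> W"
  using Q.coset_join1[of W x] Q.coset_join2[of x W] W_subgroup by auto

lemma theta_mod_W_trivial: "b \<in> B \<Longrightarrow> theta_mod_W b = \<one>\<^bsub>Q Mod W\<^esub> \<Longrightarrow> b = \<one>"
  using theta_B_in_W_trivial mod_W_eq_one B_carrier by (simp add: theta_mod_W_def)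

lemma pi_mod_W_covered:
  assumes g: "g \<in> carrier G" obtains b where "b \<in> B" "pi_mod_W g = theta_mod_W b"
proof -
  interpret \<rho>: group_hom Q "Q Mod W" "\<lambda>x. W #>\<^bsub>Q\<^esub> x" by (rule mod_W_group_hom)
  obtain b w where b: "b \<in> B" and w: "w \<in> W" and eq: "\<pi> g = \<theta> b \<otimes>\<^bsub>Q\<^esub> w"
    by (rule Q_decompose[OF \<pi>.hom_closed[OF g]])
  have "W #>\<^bsub>Q\<^esub> w = \<one>\<^bsub>Q Mod W\<^esub>" using mod_W_eq_one[OF W_carrier[OF w]] w by simp
  then have "pi_mod_W g = theta_mod_W b \<otimes>\<^bsub>Q Mod W\<^esub> \<one>\<^bsub>Q Mod W\<^esub>"
    using eq B_carrier[OF b] W_carrier[OF w] by (simp add: pi_mod_W_def theta_mod_W_def)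
  also have "\<dots> = theta_mod_W b"
    unfolding theta_mod_W_def by (rule \<rho>.H.r_one) (use B_carrier[OF b] in simp)
  finally show thesis by (rule that[OF b])
qed

definition B_lifts :: "'a set" where
  "B_lifts = {b \<in> B. \<exists>d\<in>D. theta_mod_W b = pi_mod_W d}"

lemma B_lifts_memI: "b \<in> B \<Longrightarrow> d \<in> D \<Longrightarrow> theta_mod_W b = pi_mod_W d \<Longrightarrow> b \<in> B_lifts"
  unfolding B_lifts_def by blast

lemma B_lifts_subgroup: "subgroup B_lifts G"
proof (rule subgroupI)
  interpret \<sigma>: group_hom G "Q Mod W" theta_mod_W by (rule theta_mod_W_group_hom)
  interpret \<tau>: group_hom G "Q Mod W" pi_mod_W by (rule pi_mod_W_group_hom)
  show "B_lifts \<subseteq> carrier G" using B_carrier by (auto simp: B_lifts_def)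
  have "\<one> \<in> B_lifts"
    using B_lifts_memI[OF subgroup.one_closed[OF B_subgroup] subgroup.one_closed[OF D_subgroup]] by simp
  then show "B_lifts \<noteq> {}" by blast
next
  interpret \<sigma>: group_hom G "Q Mod W" theta_mod_W by (rule theta_mod_W_group_hom)
  interpret \<tau>: group_hom G "Q Mod W" pi_mod_W by (rule pi_mod_W_group_hom)
  fix a b assume "a \<in> B_lifts" "b \<in> B_lifts"
  then obtain d e where a: "a \<in> B" "d \<in> D" "theta_mod_W a = pi_mod_W d"
    and b: "b \<in> B" "e \<in> D" "theta_mod_W b = pi_mod_W e"
    by (auto simp: B_lifts_def)
  have "theta_mod_W (inv a) = pi_mod_W (inv d)" "theta_mod_W (a \<otimes> b) = pi_mod_W (d \<otimes> e)"
    using a b B_carrier D_carrier by simp_all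
  then show "inv a \<in> B_lifts" "a \<otimes> b \<in> B_lifts"
    using B_lifts_memI a b B_subgroup D_subgroup subgroup.m_inv_closed subgroup.m_closed by metis+
qed

lemma B_lifts_divisible: "divisible_set G B_lifts"
  unfolding divisible_set_def
proof (intro ballI allI impI)
  interpret \<sigma>: group_hom G "Q Mod W" theta_mod_W by (rule theta_mod_W_group_hom)
  interpret \<tau>: group_hom G "Q Mod W" pi_mod_W by (rule pi_mod_W_group_hom)
  fix b and n :: nat assume "b \<in> B_lifts" "n > 0"
  then obtain d where b: "b \<in> B" and d: "d \<in> D" and bd: "theta_mod_W b = pi_mod_W d"
    by (auto simp: B_lifts_def)
  obtain e where e: "e \<in> D" "e [^] n = d"
    using divisible_D d \<open>n > 0\<close> unfolding divisible_set_def by blast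
  obtain b1 where b1: "b1 \<in> B" "pi_mod_W e = theta_mod_W b1"
    using pi_mod_W_covered D_carrier[OF e(1)] by blast
  have "theta_mod_W (b1 [^] n) = theta_mod_W b1 [^]\<^bsub>Q Mod W\<^esub> n"
    using B_carrier[OF b1(1)] by (simp add: \<sigma>.hom_nat_pow)
  also have "\<dots> = pi_mod_W (e [^] n)" using b1(2) D_carrier[OF e(1)] by (simp add: \<tau>.hom_nat_pow)
  finally have "theta_mod_W (b1 [^] n) = theta_mod_W b" using e(2) bd by simp
  moreover have "theta_mod_W (b \<otimes> inv (b1 [^] n))
      = theta_mod_W b \<otimes>\<^bsub>Q Mod W\<^esub> inv\<^bsub>Q Mod W\<^esub> theta_mod_W (b1 [^] n)"
    using B_carrier b b1 by (simp add: \<sigma>.hom_mult \<sigma>.hom_inv del: \<sigma>.hom_nat_pow)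
  moreover have "theta_mod_W b \<in> carrier (Q Mod W)" using B_carrier[OF b] by simp
  ultimately have "theta_mod_W (b \<otimes> inv (b1 [^] n)) = \<one>\<^bsub>Q Mod W\<^esub>" by (metis \<sigma>.H.r_inv)
  then have "b \<otimes> inv (b1 [^] n) = \<one>"
    using theta_mod_W_trivial B_subgroup b b1 subgroup_int_pow_closed[of B b1 "int n"]
    by (simp add: int_pow_int subgroup.m_closed subgroup.m_inv_closed)
  then have "b = b1 [^] n" using inv_solve_right[of \<one> b "b1 [^] n"] b b1 B_carrier by simp
  moreover have "b1 \<in> B_lifts" using B_lifts_memI[OF b1(1) e(1)] b1(2) by simp
  ultimately show "\<exists>y\<in>B_lifts. y [^] n = b" by blast
qed

lemma B_lifts_torsion: "torsion_set G B_lifts"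
  unfolding torsion_set_def
proof
  interpret \<sigma>: group_hom G "Q Mod W" theta_mod_W by (rule theta_mod_W_group_hom)
  interpret \<tau>: group_hom G "Q Mod W" pi_mod_W by (rule pi_mod_W_group_hom)
  fix b assume "b \<in> B_lifts"
  then obtain d where b: "b \<in> B" and d: "d \<in> D" and bd: "theta_mod_W b = pi_mod_W d"
    by (auto simp: B_lifts_def)
  obtain n :: nat where n: "n > 0" "d [^] n = \<one>" using torsion_D d unfolding torsion_set_def by blast
  have "theta_mod_W (b [^] n) = theta_mod_W b [^]\<^bsub>Q Mod W\<^esub> n"
    using B_carrier[OF b] by (simp add: \<sigma>.hom_nat_pow)
  also have "\<dots> = pi_mod_W (d [^] n)" using bd D_carrier[OF d] by (simp add: \<tau>.hom_nat_pow)
  finally have "theta_mod_W (b [^] n) = \<one>\<^bsub>Q Mod W\<^esub>" using n(2) by simp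
  then have "b [^] n = \<one>"
    using theta_mod_W_trivial B_subgroup b subgroup_int_pow_closed[of B b "int n"] by (simp add: int_pow_int)
  then show "\<exists>n::nat. n > 0 \<and> b [^] n = \<one>" using n(1) by blast
qed

lemma pi_D_subset_W: "\<pi> ` D \<subseteq> W"
proof
  interpret \<sigma>: group_hom G "Q Mod W" theta_mod_W by (rule theta_mod_W_group_hom)
  have trivial: "B_lifts = {\<one>}"
    using subgroup_Bassian_divisible_torsion_trivial[OF B_subgroup Bassian_B B_lifts_subgroup _
      B_lifts_divisible B_lifts_torsion] by (auto simp: B_lifts_def)
  fix x assume "x \<in> \<pi> ` D"
  then obtain d where d: "d \<in> D" "x = \<pi> d" by blast
  obtain b where b: "b \<in> B" "pi_mod_W d = theta_mod_W b" using pi_mod_W_covered D_carrier[OF d(1)] by blast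
  then have "b \<in> B_lifts" using B_lifts_memI[OF b(1) d(1)] by simp
  then have "pi_mod_W d = \<one>\<^bsub>Q Mod W\<^esub>" using b(2) trivial by simp
  then show "x \<in> W" using mod_W_eq_one D_carrier[OF d(1)] d(2) by (simp add: pi_mod_W_def)
qed

lemma pi_B_in_W_trivial:
  assumes b: "b \<in> B" and bW: "\<pi> b \<in> W" shows "b = \<one>"
proof (rule subgroup_Bassian_hom_injective[OF B_subgroup Bassian_B _ _ _ theta_mod_W_trivial])
  interpret \<rho>: group_hom Q "Q Mod W" "\<lambda>x. W #>\<^bsub>Q\<^esub> x" by (rule mod_W_group_hom)
  show "group (Q Mod W)" "theta_mod_W \<in> hom G (Q Mod W)" "pi_mod_W \<in> hom G (Q Mod W)"
    using theta_mod_W_group_hom pi_mod_W_group_hom \<rho>.H.is_group by (simp_all add: group_hom_def group_hom_axioms_def)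
  show "b \<in> B" by fact
  show "pi_mod_W b = \<one>\<^bsub>Q Mod W\<^esub>" using mod_W_eq_one bW B_carrier[OF b] by (simp add: pi_mod_W_def)
  show "theta_mod_W ` B \<subseteq> pi_mod_W ` B"
  proof
    fix y assume "y \<in> theta_mod_W ` B"
    then obtain a where a: "a \<in> B" "y = theta_mod_W a" by blast
    obtain a' d where a': "a' \<in> B" and d: "d \<in> D" and eq: "\<theta> a = \<pi> a' \<otimes>\<^bsub>Q\<^esub> \<pi> d"
      by (rule pi_decompose[OF \<theta>.hom_closed[OF B_carrier[OF a(1)]]])
    have "W #>\<^bsub>Q\<^esub> \<pi> d = \<one>\<^bsub>Q Mod W\<^esub>"
      using mod_W_eq_one pi_D_subset_W d D_carrier[OF d] by auto
    then have "y = pi_mod_W a' \<otimes>\<^bsub>Q Mod W\<^esub> \<one>\<^bsub>Q Mod W\<^esub>"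
      using a eq B_carrier[OF a'] D_carrier[OF d] by (simp add: theta_mod_W_def pi_mod_W_def)
    also have "\<dots> = pi_mod_W a'" unfolding pi_mod_W_def by (rule \<rho>.H.r_one) (use B_carrier[OF a'] in simp)
    finally show "y \<in> pi_mod_W ` B" using a' by blast
  qed
qed

lemma W_eq_pi_D: "W = \<pi> ` D"
proof
  show "\<pi> ` D \<subseteq> W" by (rule pi_D_subset_W)
  show "W \<subseteq> \<pi> ` D"
  proof
    fix w assume w: "w \<in> W"
    obtain b d where b: "b \<in> B" and d: "d \<in> D" and eq: "w = \<pi> b \<otimes>\<^bsub>Q\<^esub> \<pi> d"
      by (rule pi_decompose[OF W_carrier[OF w]])
    have "\<pi> b = w \<otimes>\<^bsub>Q\<^esub> inv\<^bsub>Q\<^esub> \<pi> d"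
      using Q.inv_solve_right eq W_carrier[OF w] B_carrier[OF b] D_carrier[OF d] by simp
    then have "\<pi> b \<in> W" using w d pi_D_subset_W subgroup.m_closed[OF W_subgroup] subgroup.m_inv_closed[OF W_subgroup]
      by auto
    then have "b = \<one>" using pi_B_in_W_trivial b by blast
    then show "w \<in> \<pi> ` D" using eq d D_carrier[OF d] by simp
  qed
qed

lemma theta_socle_mult_C_socle:
  assumes x: "x \<in> socle G p D" and c: "c \<in> C" "c [^]\<^bsub>Q\<^esub> p = \<one>\<^bsub>Q\<^esub>"
  shows "\<theta> x \<otimes>\<^bsub>Q\<^esub> c \<in> socle Q p (\<pi> ` D)"
proof -
  have xD: "x \<in> D" and xp: "x [^] p = \<one>" using x by (auto simp: socle_def)
  have "(\<theta> x \<otimes>\<^bsub>Q\<^esub> c) [^]\<^bsub>Q\<^esub> p = \<theta> (x [^] p) \<otimes>\<^bsub>Q\<^esub> c [^]\<^bsub>Q\<^esub> p"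
    using D_carrier[OF xD] subgroup.mem_carrier[OF C_subgroup c(1)]
    by (simp add: Q.nat_pow_distrib \<theta>.hom_nat_pow)
  then have "(\<theta> x \<otimes>\<^bsub>Q\<^esub> c) [^]\<^bsub>Q\<^esub> p = \<one>\<^bsub>Q\<^esub>" using xp c(2) by simp
  moreover have "\<theta> x \<otimes>\<^bsub>Q\<^esub> c \<in> W" using subgroup.m_closed[OF W_subgroup theta_D_in_W[OF xD] C_in_W[OF c(1)]] .
  ultimately show ?thesis using W_eq_pi_D by (simp add: socle_def)
qed

lemma C_socle_trivial:
  assumes p: "Factorial_Ring.prime (p::nat)" and c: "c \<in> C" "c [^]\<^bsub>Q\<^esub> p = \<one>\<^bsub>Q\<^esub>"
  shows "c = \<one>\<^bsub>Q\<^esub>"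
proof (rule ccontr)
  assume "c \<noteq> \<one>\<^bsub>Q\<^esub>"
  let ?Dp = "socle G p D"
  have Dp_finite: "finite ?Dp" using finite_socle_D[OF p] .
  have Dp_carrier: "x \<in> carrier G" if "x \<in> ?Dp" for x using that D_carrier by (auto simp: socle_def)
  have C_carrier: "a \<in> carrier Q" if "a \<in> C" for a using C_subgroup that subgroup.mem_carrier by metis
  have one: "\<one>\<^bsub>Q\<^esub> \<in> C" "\<one>\<^bsub>Q\<^esub> [^]\<^bsub>Q\<^esub> p = \<one>\<^bsub>Q\<^esub>" using C_subgroup subgroup.one_closed by auto
  define T where "T a = (\<lambda>x. \<theta> x \<otimes>\<^bsub>Q\<^esub> a) ` ?Dp" for a
  have T_socle: "T a \<subseteq> socle Q p (\<pi> ` D)" if "a \<in> C" "a [^]\<^bsub>Q\<^esub> p = \<one>\<^bsub>Q\<^esub>" for a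
    using theta_socle_mult_C_socle that by (auto simp: T_def)
  have T_card: "card (T a) = card ?Dp" if a: "a \<in> C" for a
    unfolding T_def
  proof (rule card_image, rule inj_onI)
    fix x y assume "x \<in> ?Dp" "y \<in> ?Dp" "\<theta> x \<otimes>\<^bsub>Q\<^esub> a = \<theta> y \<otimes>\<^bsub>Q\<^esub> a"
    then show "x = y" using Dp_carrier C_carrier[OF a] Q.r_cancel theta_inj by (auto dest: inj_onD)
  qed
  have "T \<one>\<^bsub>Q\<^esub> \<inter> T c = {}"
  proof (rule ccontr)
    assume "T \<one>\<^bsub>Q\<^esub> \<inter> T c \<noteq> {}"
    then obtain x y where "x \<in> ?Dp" "y \<in> ?Dp" "\<theta> x \<otimes>\<^bsub>Q\<^esub> \<one>\<^bsub>Q\<^esub> = \<theta> y \<otimes>\<^bsub>Q\<^esub> c"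
      by (auto simp: T_def)
    then have "\<one>\<^bsub>Q\<^esub> = c"
      using Q.direct_product_unique(2)[OF \<theta>.img_is_subgroup C_subgroup theta_C_disjoint]
        Dp_carrier one(1) c(1) by blast
    then show False using \<open>c \<noteq> \<one>\<^bsub>Q\<^esub>\<close> by simp
  qed
  then have "card (T \<one>\<^bsub>Q\<^esub> \<union> T c) = 2 * card ?Dp"
    using Dp_finite T_card[OF one(1)] T_card[OF c(1)] by (simp add: T_def card_Un_disjoint)
  also have "\<dots> > card ?Dp"
    using Dp_finite subgroup.one_closed[OF D_subgroup] by (auto simp: card_gt_0_iff socle_def)
  finally have "card (socle Q p (\<pi> ` D)) < card (T \<one>\<^bsub>Q\<^esub> \<union> T c)"
    using socle_card_hom_image_le[OF comm_group_axioms Q.comm_group_axioms pi_hom D_subgroup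
        torsion_D Dp_finite] by linarith
  moreover have "card (T \<one>\<^bsub>Q\<^esub> \<union> T c) \<le> card (socle Q p (\<pi> ` D))"
    using socle_card_hom_image_le(1)[OF comm_group_axioms Q.comm_group_axioms pi_hom D_subgroup
        torsion_D Dp_finite] T_socle[OF one] T_socle[OF c]
    by (intro card_mono) auto
  ultimately show False by simp
qed

lemma C_trivial: "C = {\<one>\<^bsub>Q\<^esub>}"
proof (rule ccontr)
  assume "C \<noteq> {\<one>\<^bsub>Q\<^esub>}"
  then obtain c where c: "c \<in> C" "c \<noteq> \<one>\<^bsub>Q\<^esub>" using subgroup.one_closed[OF C_subgroup] by blast
  have cc: "c \<in> carrier Q" using C_subgroup c(1) subgroup.mem_carrier by metis
  obtain d where d: "d \<in> D" "c = \<pi> d" using C_in_W[OF c(1)] W_eq_pi_D by blast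
  obtain m :: nat where m: "m > 0" "d [^] m = \<one>" using torsion_D d(1) unfolding torsion_set_def by blast
  have "c [^]\<^bsub>Q\<^esub> m = \<one>\<^bsub>Q\<^esub>" using d m D_carrier by (simp flip: \<pi>.hom_nat_pow)
  then obtain p k where p: "Factorial_Ring.prime (p::nat)"
    and ck: "c [^]\<^bsub>Q\<^esub> (k::nat) \<notin> {\<one>\<^bsub>Q\<^esub>}" "(c [^]\<^bsub>Q\<^esub> k) [^]\<^bsub>Q\<^esub> p \<in> {\<one>\<^bsub>Q\<^esub>}"
    using Q.prime_power_step[OF Q.triv_subgroup cc _ m(1)] c(2) by auto
  have "c [^]\<^bsub>Q\<^esub> k \<in> C"
    using Q.subgroup_int_pow_closed[OF C_subgroup c(1), of "int k"] by (simp add: int_pow_int)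
  then show False using C_socle_trivial[OF p] ck by auto
qed

end

lemma Extended_Bassian_decomposition:
  assumes G: "comm_group G" and EB: "Extended_Bassian G"
  obtains B D where "ext_Bassian_decomposition G B D"
proof -
  interpret comm_group G by fact
  obtain B D n where B: "subgroup B G" and D: "subgroup D G" and BD: "B <#>\<^bsub>G\<^esub> D = carrier G"
    and BD1: "B \<inter> D = {\<one>\<^bsub>G\<^esub>}" and Bas: "Bassian (G\<lparr>carrier := B\<rparr>)"
    and iso: "G\<lparr>carrier := D\<rparr> \<cong> quasicyclic_sum n"
    using EB unfolding Extended_Bassian_def by blast
  obtain \<phi> where \<phi>: "\<phi> \<in> iso (G\<lparr>carrier := D\<rparr>) (quasicyclic_sum n)" using iso by (auto simp: is_iso_def)
  note reflect = iso_reflects_torsion_divisible_socle[OF \<phi> subgroup.subgroup_is_group[OF D is_group]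
      quasicyclic_sum_group]
  have "torsion_set G D" "divisible_set G D"
    using reflect(1)[OF quasicyclic_sum_torsion] reflect(2)[OF quasicyclic_sum_divisible]
    by (simp_all add: torsion_set_def divisible_set_def flip: nat_pow_consistent)
  moreover have "finite (socle G p D)" if "Factorial_Ring.prime p" for p
    using reflect(3)[OF quasicyclic_sum_finite_socle[OF that]]
    by (simp add: socle_def flip: nat_pow_consistent)
  ultimately have "ext_Bassian_decomposition G B D"
    using B D BD BD1 Bas G
    by (simp add: ext_Bassian_decomposition_def ext_Bassian_decomposition_axioms_def)
  then show thesis by (rule that)
qed

lemma (in ext_Bassian_decomposition) relatively_Hopfian: "relatively_Hopfian G"
  unfolding relatively_Hopfian_def
proof (intro notI, elim exE conjE)
  fix H A C
  assume H: "subgroup H G" and "H \<noteq> {\<one>}" and A: "subgroup A (G Mod H)" and C: "subgroup C (G Mod H)"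
    and AC: "A <#>\<^bsub>G Mod H\<^esub> C = carrier (G Mod H)" and AC1: "A \<inter> C = {\<one>\<^bsub>G Mod H\<^esub>}"
    and C1: "C \<noteq> {\<one>\<^bsub>G Mod H\<^esub>}" and iso: "(G Mod H)\<lparr>carrier := A\<rparr> \<cong> G"
  interpret Q: comm_group "G Mod H" using abelian_FactGroup[OF H] .
  obtain \<psi> where \<psi>: "\<psi> \<in> iso ((G Mod H)\<lparr>carrier := A\<rparr>) G" using iso by (auto simp: is_iso_def)
  define \<theta> where "\<theta> = inv_into A \<psi>"
  have "\<theta> \<in> iso G ((G Mod H)\<lparr>carrier := A\<rparr>)"
    using group.iso_set_sym[OF subgroup.subgroup_is_group[OF A Q.is_group] \<psi>] by (simp add: \<theta>_def)
  then have \<theta>_hom: "\<theta> \<in> hom G ((G Mod H)\<lparr>carrier := A\<rparr>)" and \<theta>_bij: "bij_betw \<theta> (carrier G) A"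
    by (auto simp: iso_def)
  interpret quotient_with_summand_copy G B D "G Mod H" "\<lambda>a. H #> a" \<theta> C
  proof (intro quotient_with_summand_copy.intro quotient_with_summand_copy_axioms.intro)
    show "ext_Bassian_decomposition G B D" by (rule ext_Bassian_decomposition_axioms)
    show "comm_group (G Mod H)" by (rule Q.comm_group_axioms)
    show "(\<lambda>a. H #> a) \<in> hom G (G Mod H)"
      using normal.r_coset_hom_Mod[OF subgroup_imp_normal[OF H]] .
    show "(\<lambda>a. H #> a) ` carrier G = carrier (G Mod H)"
      by (auto simp: FactGroup_def RCOSETS_def)
    show "\<theta> \<in> hom G (G Mod H)" using \<theta>_hom subgroup.subset[OF A] by (auto simp: hom_def)
    show "inj_on \<theta> (carrier G)" using \<theta>_bij by (simp add: bij_betw_def)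
    show "\<theta> ` carrier G <#>\<^bsub>G Mod H\<^esub> C = carrier (G Mod H)"
      and "\<theta> ` carrier G \<inter> C = {\<one>\<^bsub>G Mod H\<^esub>}"
      using \<theta>_bij AC AC1 by (simp_all add: bij_betw_def)
  qed (rule C)
  show False using C_trivial C1 by simp
qed

theorem proposition4p1:
  fixes G :: "('a, 'b) monoid_scheme"
  assumes "comm_group G" and "Extended_Bassian G"
  shows "relatively_Hopfian G"
proof -
  obtain B D where "ext_Bassian_decomposition G B D"
    using Extended_Bassian_decomposition[OF assms] .
  then show ?thesis by (rule ext_Bassian_decomposition.relatively_Hopfian)
qed

end
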